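(* Let $A$ be a finite-vertex graph and $\mathsf V$ a pseudovariety of semigroups containing $B_2$. If the multiplication in $\overline{\Omega}_{E(A)}\mathsf V$ is an open mapping, then the multiplication in $\overline{\Omega}_A g\mathsf V$ is also an open mapping.
   Context: A graph $A$ consists of vertices $V(A)$, edges $E(A)$, source and range maps $\alpha,\omega$; finite-vertex means $V(A)$ finite. Semigroupoids are graphs with an associative partial multiplication defined on $D(S)=\{(s,t):\alpha(s)=\omega(t)\}$. $g\mathsf V$ is the smallest pseudovariety of semigroupoids (classes of finite semigroupoids closed under divisors, finite direct products and finite coproducts) containing $\mathsf V$. $\overline{\Omega}_A g\mathsf V$ is the free pro-$g\mathsf V$ semigroupoid over $A$ and $\overline{\Omega}_{E(A)}\mathsf V$ the free pro-$\mathsf V$ semigroup over the set $E(A)$. $B_2$ is the aperiodic Brandt semigroup on $(Q\times Q)\cup\{0\}$ with $|Q|=2$, $0$ a zero, $(p,r)(s,q)=0$ if $r\ne s$ and $(p,r)(r,q)=(p,q)$. Multiplication in $S$ is open if the map $D(S)\to E(S)$ sends open sets to open sets. *)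

theory Defs
  imports "HOL-Analysis.Analysis"
begin

type_synonym 'a sg = "'a set \<times> ('a \<Rightarrow> 'a \<Rightarrow> 'a)"

definition fin_sg :: "'a sg \<Rightarrow> bool" where
  "fin_sg S \<longleftrightarrow> finite (fst S) \<and> fst S \<noteq> {} \<and>
     (\<forall>x\<in>fst S. \<forall>y\<in>fst S. snd S x y \<in> fst S) \<and>
     (\<forall>x\<in>fst S. \<forall>y\<in>fst S. \<forall>z\<in>fst S. snd S (snd S x y) z = snd S x (snd S y z))"

definition sg_hom_on :: "'a set \<Rightarrow> ('a \<Rightarrow> 'a \<Rightarrow> 'a) \<Rightarrow> 'b sg \<Rightarrow> ('a \<Rightarrow> 'b) \<Rightarrow> bool" where
  "sg_hom_on U m T h \<longleftrightarrow> (\<forall>x\<in>U. h x \<in> fst T) \<and>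
     (\<forall>x\<in>U. \<forall>y\<in>U. h (m x y) = snd T (h x) (h y))"

definition sg_hom :: "'a sg \<Rightarrow> 'b sg \<Rightarrow> ('a \<Rightarrow> 'b) \<Rightarrow> bool" where
  "sg_hom S T h \<longleftrightarrow> sg_hom_on (fst S) (snd S) T h"

definition sg_iso :: "'a sg \<Rightarrow> 'b sg \<Rightarrow> bool" where
  "sg_iso S T \<longleftrightarrow> (\<exists>h. bij_betw h (fst S) (fst T) \<and> sg_hom S T h)"

definition sg_divides :: "'a sg \<Rightarrow> 'b sg \<Rightarrow> bool" where
  "sg_divides S T \<longleftrightarrow> (\<exists>U h. U \<subseteq> fst T \<and> U \<noteq> {} \<and> (\<forall>x\<in>U. \<forall>y\<in>U. snd T x y \<in> U) \<and>
      sg_hom_on U (snd T) S h \<and> h ` U = fst S)"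

definition sg_prod :: "'a sg \<Rightarrow> 'b sg \<Rightarrow> ('a \<times> 'b) sg" where
  "sg_prod S T = (fst S \<times> fst T, \<lambda>(a, b) (c, d). (snd S a c, snd T b d))"

definition sg_trivial :: "nat sg" where
  "sg_trivial = ({0}, \<lambda>_ _. 0)"

text \<open>A pseudovariety of semigroups, as a class of finite semigroups with carriers in nat
  (every finite semigroup is isomorphic to such a one): closed under divisors and finite
  direct products (including the empty product, the trivial semigroup).\<close>
definition sg_pvar :: "nat sg set \<Rightarrow> bool" where
  "sg_pvar V \<longleftrightarrow> (\<forall>S\<in>V. fin_sg S) \<and> sg_trivial \<in> V \<and>
     (\<forall>S T. fin_sg S \<and> T \<in> V \<and> sg_divides S T \<longrightarrow> S \<in> V) \<and>
     (\<forall>P S T. fin_sg P \<and> S \<in> V \<and> T \<in> V \<and> sg_iso P (sg_prod S T) \<longrightarrow> P \<in> V)"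

text \<open>The aperiodic Brandt semigroup B2 on (Q x Q) + {0}, Q = bool, None = 0.\<close>
definition B2 :: "(bool \<times> bool) option sg" where
  "B2 = (UNIV, \<lambda>x y. case (x, y) of
            (Some (p, r), Some (s, q)) \<Rightarrow> (if r = s then Some (p, q) else None)
          | _ \<Rightarrow> None)"

definition contains_B2 :: "nat sg set \<Rightarrow> bool" where
  "contains_B2 V \<longleftrightarrow> (\<exists>S\<in>V. sg_iso S B2)"

inductive_set sg_gen :: "('a \<Rightarrow> 'a \<Rightarrow> 'a) \<Rightarrow> 'a set \<Rightarrow> 'a set" for m X where
  base: "x \<in> X \<Longrightarrow> x \<in> sg_gen m X"
| mult: "a \<in> sg_gen m X \<Longrightarrow> b \<in> sg_gen m X \<Longrightarrow> m a b \<in> sg_gen m X"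

text \<open>Realised as the inverse limit: families indexed by all valuations
  (S, phi), S in V, phi : X -> S, compatible with all homomorphisms commuting with the
  valuations, and lying in the subsemigroup generated by phi(X).  Non-valuation indices are
  normalised to 0.\<close>

definition sg_val :: "nat sg set \<Rightarrow> 'x set \<Rightarrow> nat sg \<times> ('x \<Rightarrow> nat) \<Rightarrow> bool" where
  "sg_val V X v \<longleftrightarrow> fst v \<in> V \<and> snd v ` X \<subseteq> fst (fst v)"

definition free_sg :: "nat sg set \<Rightarrow> 'x set \<Rightarrow> (nat sg \<times> ('x \<Rightarrow> nat) \<Rightarrow> nat) set" where
  "free_sg V X = {w.
     (\<forall>v. sg_val V X v \<longrightarrow> w v \<in> sg_gen (snd (fst v)) (snd v ` X)) \<and>
     (\<forall>v. \<not> sg_val V X v \<longrightarrow> w v = 0) \<and>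
     (\<forall>S \<phi> T \<psi> h. sg_val V X (S, \<phi>) \<and> sg_val V X (T, \<psi>) \<and> sg_hom S T h \<and>
        (\<forall>x\<in>X. h (\<phi> x) = \<psi> x) \<longrightarrow> h (w (S, \<phi>)) = w (T, \<psi>))}"

text \<open>Profinite topology: initial topology for the projections to the (discrete) finite
  semigroups.\<close>
definition free_sg_top :: "nat sg set \<Rightarrow> 'x set \<Rightarrow> (nat sg \<times> ('x \<Rightarrow> nat) \<Rightarrow> nat) topology" where
  "free_sg_top V X = topology_generated_by
     (insert (free_sg V X) {{w \<in> free_sg V X. w v = n} | v n. True})"

definition free_sg_mul :: "nat sg set \<Rightarrow> 'x set \<Rightarrow> (nat sg \<times> ('x \<Rightarrow> nat) \<Rightarrow> nat)
     \<Rightarrow> (nat sg \<times> ('x \<Rightarrow> nat) \<Rightarrow> nat) \<Rightarrow> (nat sg \<times> ('x \<Rightarrow> nat) \<Rightarrow> nat)" where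
  "free_sg_mul V X u w = (\<lambda>v. if sg_val V X v then snd (fst v) (u v) (w v) else 0)"

definition free_sg_mult_open :: "nat sg set \<Rightarrow> 'x set \<Rightarrow> bool" where
  "free_sg_mult_open V X \<longleftrightarrow>
     open_map (prod_topology (free_sg_top V X) (free_sg_top V X)) (free_sg_top V X)
              (\<lambda>(u, w). free_sg_mul V X u w)"

record ('v, 'e) sgraph =
  verts :: "'v set"
  edges :: "'e set"
  src :: "'e \<Rightarrow> 'v"
  tgt :: "'e \<Rightarrow> 'v"

record ('v, 'e) sgd = "('v, 'e) sgraph" +
  mul :: "'e \<Rightarrow> 'e \<Rightarrow> 'e"

definition is_graph :: "('v, 'e, 'z) sgraph_scheme \<Rightarrow> bool" where
  "is_graph G \<longleftrightarrow> (\<forall>e\<in>edges G. src G e \<in> verts G \<and> tgt G e \<in> verts G)"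

definition is_sgd :: "('v, 'e) sgd \<Rightarrow> bool" where
  "is_sgd S \<longleftrightarrow> is_graph S \<and>
     (\<forall>s\<in>edges S. \<forall>t\<in>edges S. src S s = tgt S t \<longrightarrow>
        mul S s t \<in> edges S \<and> src S (mul S s t) = src S t \<and> tgt S (mul S s t) = tgt S s) \<and>
     (\<forall>s\<in>edges S. \<forall>t\<in>edges S. \<forall>u\<in>edges S. src S s = tgt S t \<and> src S t = tgt S u \<longrightarrow>
        mul S (mul S s t) u = mul S s (mul S t u))"

definition fin_sgd :: "('v, 'e) sgd \<Rightarrow> bool" where
  "fin_sgd S \<longleftrightarrow> is_sgd S \<and> finite (verts S) \<and> finite (edges S)"

definition graph_hom :: "('v, 'e, 'z) sgraph_scheme \<Rightarrow> ('w, 'f, 'y) sgraph_scheme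
     \<Rightarrow> ('v \<Rightarrow> 'w) \<Rightarrow> ('e \<Rightarrow> 'f) \<Rightarrow> bool" where
  "graph_hom G H fv fe \<longleftrightarrow> (\<forall>x\<in>verts G. fv x \<in> verts H) \<and>
     (\<forall>e\<in>edges G. fe e \<in> edges H \<and> src H (fe e) = fv (src G e) \<and> tgt H (fe e) = fv (tgt G e))"

definition sgd_hom :: "('v, 'e) sgd \<Rightarrow> ('w, 'f) sgd \<Rightarrow> ('v \<Rightarrow> 'w) \<Rightarrow> ('e \<Rightarrow> 'f) \<Rightarrow> bool" where
  "sgd_hom S T fv fe \<longleftrightarrow> graph_hom S T fv fe \<and>
     (\<forall>s\<in>edges S. \<forall>t\<in>edges S. src S s = tgt S t \<longrightarrow> fe (mul S s t) = mul T (fe s) (fe t))"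

definition sgd_iso :: "('v, 'e) sgd \<Rightarrow> ('w, 'f) sgd \<Rightarrow> bool" where
  "sgd_iso S T \<longleftrightarrow> (\<exists>fv fe. bij_betw fv (verts S) (verts T) \<and> bij_betw fe (edges S) (edges T) \<and>
      sgd_hom S T fv fe)"

text \<open>Tilson's division: a relational morphism (vertex function f, edge relation tau)
  that is injective on coterminal edges.\<close>
definition sgd_divides :: "('v, 'e) sgd \<Rightarrow> ('w, 'f) sgd \<Rightarrow> bool" where
  "sgd_divides S T \<longleftrightarrow> (\<exists>f \<tau>.
     (\<forall>x\<in>verts S. f x \<in> verts T) \<and>
     (\<forall>s\<in>edges S. \<exists>t. (s, t) \<in> \<tau>) \<and>
     (\<forall>(s, t)\<in>\<tau>. s \<in> edges S \<and> t \<in> edges T \<and> src T t = f (src S s) \<and> tgt T t = f (tgt S s)) \<and>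
     (\<forall>(s, t)\<in>\<tau>. \<forall>(s', t')\<in>\<tau>. src S s = tgt S s' \<longrightarrow> (mul S s s', mul T t t') \<in> \<tau>) \<and>
     (\<forall>(s, t)\<in>\<tau>. \<forall>(s', t')\<in>\<tau>. src S s = src S s' \<and> tgt S s = tgt S s' \<and> t = t' \<longrightarrow> s = s'))"

definition sgd_prod :: "('v, 'e) sgd \<Rightarrow> ('w, 'f) sgd \<Rightarrow> ('v \<times> 'w, 'e \<times> 'f) sgd" where
  "sgd_prod S T = \<lparr>verts = verts S \<times> verts T, edges = edges S \<times> edges T,
     src = (\<lambda>(a, b). (src S a, src T b)), tgt = (\<lambda>(a, b). (tgt S a, tgt T b)),
     mul = (\<lambda>(a, b) (c, d). (mul S a c, mul T b d))\<rparr>"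

definition sgd_coprod :: "('v, 'e) sgd \<Rightarrow> ('w, 'f) sgd \<Rightarrow> ('v + 'w, 'e + 'f) sgd" where
  "sgd_coprod S T = \<lparr>verts = Inl ` verts S \<union> Inr ` verts T, edges = Inl ` edges S \<union> Inr ` edges T,
     src = case_sum (Inl \<circ> src S) (Inr \<circ> src T), tgt = case_sum (Inl \<circ> tgt S) (Inr \<circ> tgt T),
     mul = (\<lambda>x y. case (x, y) of (Inl a, Inl b) \<Rightarrow> Inl (mul S a b)
                              | (Inr a, Inr b) \<Rightarrow> Inr (mul T a b)
                              | _ \<Rightarrow> x)\<rparr>"

definition sgd_terminal :: "(nat, nat) sgd" where
  "sgd_terminal = \<lparr>verts = {0}, edges = {0}, src = (\<lambda>_. 0), tgt = (\<lambda>_. 0), mul = (\<lambda>_ _. 0)\<rparr>"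

definition sgd_empty :: "(nat, nat) sgd" where
  "sgd_empty = \<lparr>verts = {}, edges = {}, src = (\<lambda>_. 0), tgt = (\<lambda>_. 0), mul = (\<lambda>_ _. 0)\<rparr>"

definition sgd_pvar :: "(nat, nat) sgd set \<Rightarrow> bool" where
  "sgd_pvar C \<longleftrightarrow> (\<forall>S\<in>C. fin_sgd S) \<and> sgd_terminal \<in> C \<and> sgd_empty \<in> C \<and>
     (\<forall>S T. fin_sgd S \<and> T \<in> C \<and> sgd_divides S T \<longrightarrow> S \<in> C) \<and>
     (\<forall>P S T. fin_sgd P \<and> S \<in> C \<and> T \<in> C \<and> sgd_iso P (sgd_prod S T) \<longrightarrow> P \<in> C) \<and>
     (\<forall>P S T. fin_sgd P \<and> S \<in> C \<and> T \<in> C \<and> sgd_iso P (sgd_coprod S T) \<longrightarrow> P \<in> C)"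

definition sg_as_sgd :: "nat sg \<Rightarrow> (nat, nat) sgd" where
  "sg_as_sgd S = \<lparr>verts = {0}, edges = fst S, src = (\<lambda>_. 0), tgt = (\<lambda>_. 0), mul = snd S\<rparr>"

definition gV :: "nat sg set \<Rightarrow> (nat, nat) sgd set" where
  "gV V = \<Inter> {C. sgd_pvar C \<and> sg_as_sgd ` V \<subseteq> C}"

inductive_set sgd_gen :: "('v, 'e) sgd \<Rightarrow> 'e set \<Rightarrow> 'e set" for S F where
  base: "e \<in> F \<Longrightarrow> e \<in> sgd_gen S F"
| mult: "s \<in> sgd_gen S F \<Longrightarrow> t \<in> sgd_gen S F \<Longrightarrow> src S s = tgt S t \<Longrightarrow> mul S s t \<in> sgd_gen S F"

type_synonym ('v, 'e) sgd_val = "(nat, nat) sgd \<times> ('v \<Rightarrow> nat) \<times> ('e \<Rightarrow> nat)"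

definition sgd_val :: "(nat, nat) sgd set \<Rightarrow> ('v, 'e) sgraph \<Rightarrow> ('v, 'e) sgd_val \<Rightarrow> bool" where
  "sgd_val C A v \<longleftrightarrow> fst v \<in> C \<and> graph_hom A (fst v) (fst (snd v)) (snd (snd v))"

text \<open>An edge (x, y, w): source x, range y (vertices of A), and a compatible family w.\<close>
definition free_sgd_edges :: "(nat, nat) sgd set \<Rightarrow> ('v, 'e) sgraph
     \<Rightarrow> ('v \<times> 'v \<times> (('v, 'e) sgd_val \<Rightarrow> nat)) set" where
  "free_sgd_edges C A = {(x, y, w). x \<in> verts A \<and> y \<in> verts A \<and>
     (\<forall>S fv fe. sgd_val C A (S, fv, fe) \<longrightarrow>
        w (S, fv, fe) \<in> sgd_gen S (fe ` edges A) \<and>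
        src S (w (S, fv, fe)) = fv x \<and> tgt S (w (S, fv, fe)) = fv y) \<and>
     (\<forall>v. \<not> sgd_val C A v \<longrightarrow> w v = 0) \<and>
     (\<forall>S fv fe T gv ge hv he. sgd_val C A (S, fv, fe) \<and> sgd_val C A (T, gv, ge) \<and>
        sgd_hom S T hv he \<and> (\<forall>x\<in>verts A. hv (fv x) = gv x) \<and> (\<forall>e\<in>edges A. he (fe e) = ge e)
        \<longrightarrow> he (w (S, fv, fe)) = w (T, gv, ge))}"

definition free_sgd_top :: "(nat, nat) sgd set \<Rightarrow> ('v, 'e) sgraph
     \<Rightarrow> ('v \<times> 'v \<times> (('v, 'e) sgd_val \<Rightarrow> nat)) topology" where
  "free_sgd_top C A = topology_generated_by
     (insert (free_sgd_edges C A)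
       ({{e \<in> free_sgd_edges C A. fst e = x} | x. True} \<union>
        {{e \<in> free_sgd_edges C A. fst (snd e) = y} | y. True} \<union>
        {{e \<in> free_sgd_edges C A. snd (snd e) v = n} | v n. True}))"

definition free_sgd_D :: "(nat, nat) sgd set \<Rightarrow> ('v, 'e) sgraph
     \<Rightarrow> (('v \<times> 'v \<times> (('v, 'e) sgd_val \<Rightarrow> nat)) \<times> ('v \<times> 'v \<times> (('v, 'e) sgd_val \<Rightarrow> nat))) set" where
  "free_sgd_D C A = {(s, t). s \<in> free_sgd_edges C A \<and> t \<in> free_sgd_edges C A \<and> fst s = fst (snd t)}"

definition free_sgd_mul :: "(nat, nat) sgd set \<Rightarrow> ('v, 'e) sgraph
     \<Rightarrow> ('v \<times> 'v \<times> (('v, 'e) sgd_val \<Rightarrow> nat)) \<Rightarrow> ('v \<times> 'v \<times> (('v, 'e) sgd_val \<Rightarrow> nat))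
     \<Rightarrow> ('v \<times> 'v \<times> (('v, 'e) sgd_val \<Rightarrow> nat))" where
  "free_sgd_mul C A s t = (fst t, fst (snd s),
     \<lambda>v. if sgd_val C A v then mul (fst v) (snd (snd s) v) (snd (snd t) v) else 0)"

definition free_sgd_mult_open :: "(nat, nat) sgd set \<Rightarrow> ('v, 'e) sgraph \<Rightarrow> bool" where
  "free_sgd_mult_open C A \<longleftrightarrow>
     open_map (subtopology (prod_topology (free_sgd_top C A) (free_sgd_top C A)) (free_sgd_D C A))
              (free_sgd_top C A) (\<lambda>(s, t). free_sgd_mul C A s t)"

end

(*
  Forgetting vertices, i.e. evaluating only at one-vertex semigroupoids, maps the free pro-gV
  semigroupoid over A continuously and multiplicatively into the free pro-V semigroup over E(A).
  This map is injective: the endpoints of an edge are read off from its values in B2, and its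
  value at any C in gV from its value at a member of V which C divides. Near the image of an
  edge from x to y the map is also onto: since B2 is in V, every element of the free pro-V
  semigroup that agrees with that image on B2 is, at finitely many valuations at a time, the
  value of a path from x to y, and evaluating these paths in the members of gV lifts it. So basic
  neighbourhoods correspond under the map, and openness of multiplication transfers from the
  semigroup to the semigroupoid.
*)
theory Submission imports Defs "HOL-Library.Nat_Bijection" begin

definition sgd_division :: "('v, 'e) sgd \<Rightarrow> ('w, 'f) sgd \<Rightarrow> ('v \<Rightarrow> 'w) \<Rightarrow> ('e \<times> 'f) set \<Rightarrow> bool" where
  "sgd_division S T f \<tau> \<longleftrightarrow>
     (\<forall>x\<in>verts S. f x \<in> verts T) \<and>
     (\<forall>s\<in>edges S. \<exists>t. (s, t) \<in> \<tau>) \<and>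
     (\<forall>(s, t)\<in>\<tau>. s \<in> edges S \<and> t \<in> edges T \<and> src T t = f (src S s) \<and> tgt T t = f (tgt S s)) \<and>
     (\<forall>(s, t)\<in>\<tau>. \<forall>(s', t')\<in>\<tau>. src S s = tgt S s' \<longrightarrow> (mul S s s', mul T t t') \<in> \<tau>) \<and>
     (\<forall>(s, t)\<in>\<tau>. \<forall>(s', t')\<in>\<tau>. src S s = src S s' \<and> tgt S s = tgt S s' \<and> t = t' \<longrightarrow> s = s')"

lemma sgd_divides_iff: "sgd_divides S T \<longleftrightarrow> (\<exists>f \<tau>. sgd_division S T f \<tau>)"
  unfolding sgd_divides_def sgd_division_def by (rule refl)

lemma sgd_divisionI:
  assumes "\<And>x. x \<in> verts S \<Longrightarrow> f x \<in> verts T"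
    and "\<And>s. s \<in> edges S \<Longrightarrow> \<exists>t. (s, t) \<in> \<tau>"
    and "\<And>s t. (s, t) \<in> \<tau> \<Longrightarrow> s \<in> edges S \<and> t \<in> edges T \<and> src T t = f (src S s) \<and> tgt T t = f (tgt S s)"
    and "\<And>s t s' t'. (s, t) \<in> \<tau> \<Longrightarrow> (s', t') \<in> \<tau> \<Longrightarrow> src S s = tgt S s' \<Longrightarrow> (mul S s s', mul T t t') \<in> \<tau>"
    and "\<And>s t s' t'. (s, t) \<in> \<tau> \<Longrightarrow> (s', t') \<in> \<tau> \<Longrightarrow> src S s = src S s' \<Longrightarrow> tgt S s = tgt S s' \<Longrightarrow> t = t' \<Longrightarrow> s = s'"
  shows "sgd_division S T f \<tau>"
  unfolding sgd_division_def using assms by fast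

lemma sgd_divisionD:
  assumes "sgd_division S T f \<tau>"
  shows "\<And>x. x \<in> verts S \<Longrightarrow> f x \<in> verts T"
    and "\<And>s. s \<in> edges S \<Longrightarrow> \<exists>t. (s, t) \<in> \<tau>"
    and "\<And>s t. (s, t) \<in> \<tau> \<Longrightarrow> s \<in> edges S"
    and "\<And>s t. (s, t) \<in> \<tau> \<Longrightarrow> t \<in> edges T"
    and "\<And>s t. (s, t) \<in> \<tau> \<Longrightarrow> src T t = f (src S s)"
    and "\<And>s t. (s, t) \<in> \<tau> \<Longrightarrow> tgt T t = f (tgt S s)"
    and "\<And>s t s' t'. (s, t) \<in> \<tau> \<Longrightarrow> (s', t') \<in> \<tau> \<Longrightarrow> src S s = tgt S s' \<Longrightarrow> (mul S s s', mul T t t') \<in> \<tau>"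
    and "\<And>s t s' t'. (s, t) \<in> \<tau> \<Longrightarrow> (s', t') \<in> \<tau> \<Longrightarrow> src S s = src S s' \<Longrightarrow> tgt S s = tgt S s' \<Longrightarrow> t = t' \<Longrightarrow> s = s'"
  using assms unfolding sgd_division_def by fast+

lemma sgd_division_comp:
  assumes a: "sgd_division S T f1 \<tau>1" and b: "sgd_division T R f2 \<tau>2"
  shows "sgd_division S R (f2 \<circ> f1) (\<tau>1 O \<tau>2)"
proof (rule sgd_divisionI)
  show "(f2 \<circ> f1) x \<in> verts R" if "x \<in> verts S" for x
    using that sgd_divisionD(1)[OF a] sgd_divisionD(1)[OF b] by auto
  show "\<exists>r. (s, r) \<in> \<tau>1 O \<tau>2" if s: "s \<in> edges S" for s
  proof -
    obtain t where t: "(s, t) \<in> \<tau>1" using sgd_divisionD(2)[OF a s] by blast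
    obtain r where "(t, r) \<in> \<tau>2" using sgd_divisionD(2)[OF b sgd_divisionD(4)[OF a t]] by blast
    with t show ?thesis by blast
  qed
  show "s \<in> edges S \<and> r \<in> edges R \<and> src R r = (f2 \<circ> f1) (src S s) \<and> tgt R r = (f2 \<circ> f1) (tgt S s)"
    if "(s, r) \<in> \<tau>1 O \<tau>2" for s r
    using that sgd_divisionD(3-6)[OF a] sgd_divisionD(3-6)[OF b] by fastforce
  show "(mul S s s', mul R r r') \<in> \<tau>1 O \<tau>2"
    if st: "(s, r) \<in> \<tau>1 O \<tau>2" "(s', r') \<in> \<tau>1 O \<tau>2" and comp: "src S s = tgt S s'"
    for s r s' r'
  proof -
    obtain t t' where h: "(s, t) \<in> \<tau>1" "(t, r) \<in> \<tau>2" "(s', t') \<in> \<tau>1" "(t', r') \<in> \<tau>2"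
      using st by blast
    have "src T t = tgt T t'" using sgd_divisionD(5,6)[OF a] h comp by metis
    then have "(mul T t t', mul R r r') \<in> \<tau>2" using sgd_divisionD(7)[OF b h(2) h(4)] by blast
    with sgd_divisionD(7)[OF a h(1) h(3) comp] show ?thesis by blast
  qed
  show "s = s'" if st: "(s, r) \<in> \<tau>1 O \<tau>2" "(s', r') \<in> \<tau>1 O \<tau>2"
    and eq: "src S s = src S s'" "tgt S s = tgt S s'" "r = r'" for s r s' r'
  proof -
    obtain t t' where h: "(s, t) \<in> \<tau>1" "(t, r) \<in> \<tau>2" "(s', t') \<in> \<tau>1" "(t', r') \<in> \<tau>2"
      using st by blast
    have "src T t = src T t'" "tgt T t = tgt T t'" using sgd_divisionD(5,6)[OF a] h eq(1,2) by metis+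
    then have "t = t'" using sgd_divisionD(8)[OF b h(2) h(4)] eq(3) by blast
    then show ?thesis using sgd_divisionD(8)[OF a h(1) h(3) eq(1,2)] by blast
  qed
qed

lemma sgd_divides_trans [trans]: "sgd_divides S T \<Longrightarrow> sgd_divides T R \<Longrightarrow> sgd_divides S R"
  unfolding sgd_divides_iff using sgd_division_comp by blast

lemma sgd_iso_divides:
  assumes "sgd_iso P Q" "is_sgd P" shows "sgd_divides P Q"
proof -
  from assms obtain fv fe where "bij_betw fe (edges P) (edges Q)" and h: "sgd_hom P Q fv fe"
    unfolding sgd_iso_def by blast
  then have inj: "inj_on fe (edges P)" by (simp add: bij_betw_def)
  have "sgd_division P Q fv {(s, fe s) | s. s \<in> edges P}"
    by (rule sgd_divisionI)
      (use h inj assms(2) in \<open>auto simp: is_sgd_def sgd_hom_def graph_hom_def inj_on_def\<close>)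
  then show ?thesis unfolding sgd_divides_iff by blast
qed

definition sg_prod_nat :: "nat sg \<Rightarrow> nat sg \<Rightarrow> nat sg" where
  "sg_prod_nat S T = (prod_encode ` (fst S \<times> fst T),
     \<lambda>a b. prod_encode (snd S (fst (prod_decode a)) (fst (prod_decode b)),
                        snd T (snd (prod_decode a)) (snd (prod_decode b))))"

lemma fin_sg_sg_prod_nat: "fin_sg S \<Longrightarrow> fin_sg T \<Longrightarrow> fin_sg (sg_prod_nat S T)"
  unfolding fin_sg_def sg_prod_nat_def by auto

lemma sg_iso_sg_prod_nat: "sg_iso (sg_prod_nat S T) (sg_prod S T)"
  unfolding sg_iso_def
proof (intro exI[of _ prod_decode] conjI)
  show "bij_betw prod_decode (fst (sg_prod_nat S T)) (fst (sg_prod S T))"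
    unfolding sg_prod_nat_def sg_prod_def bij_betw_def inj_on_def by (auto simp: image_iff)
  show "sg_hom (sg_prod_nat S T) (sg_prod S T) prod_decode"
    unfolding sg_hom_def sg_hom_on_def sg_prod_nat_def sg_prod_def by auto
qed

lemma sg_pvar_fin_sg: "sg_pvar V \<Longrightarrow> S \<in> V \<Longrightarrow> fin_sg S"
  unfolding sg_pvar_def by blast

lemma sg_pvar_prod_nat_closed:
  assumes V: "sg_pvar V" and "S \<in> V" "T \<in> V" shows "sg_prod_nat S T \<in> V"
proof -
  have "fin_sg (sg_prod_nat S T)"
    using fin_sg_sg_prod_nat sg_pvar_fin_sg[OF V] assms(2,3) by blast
  then show ?thesis using V assms(2,3) sg_iso_sg_prod_nat unfolding sg_pvar_def by blast
qed

lemma sg_hom_prod_nat_fst: "sg_hom (sg_prod_nat S T) S (\<lambda>a. fst (prod_decode a))"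
  and sg_hom_prod_nat_snd: "sg_hom (sg_prod_nat S T) T (\<lambda>a. snd (prod_decode a))"
  unfolding sg_hom_def sg_hom_on_def sg_prod_nat_def by auto

lemma sg_hom_comp: "sg_hom S T h \<Longrightarrow> sg_hom T R g \<Longrightarrow> sg_hom S R (g \<circ> h)"
  unfolding sg_hom_def sg_hom_on_def by auto

definition sgd_prod_nat :: "(nat, nat) sgd \<Rightarrow> (nat, nat) sgd \<Rightarrow> (nat, nat) sgd" where
  "sgd_prod_nat C D =
    \<lparr>verts = prod_encode ` (verts C \<times> verts D), edges = prod_encode ` (edges C \<times> edges D),
     src = (\<lambda>e. prod_encode (src C (fst (prod_decode e)), src D (snd (prod_decode e)))),
     tgt = (\<lambda>e. prod_encode (tgt C (fst (prod_decode e)), tgt D (snd (prod_decode e)))),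
     mul = (\<lambda>a b. prod_encode (mul C (fst (prod_decode a)) (fst (prod_decode b)),
                              mul D (snd (prod_decode a)) (snd (prod_decode b))))\<rparr>"

lemma fin_sgd_sgd_prod_nat: "fin_sgd C \<Longrightarrow> fin_sgd D \<Longrightarrow> fin_sgd (sgd_prod_nat C D)"
  unfolding fin_sgd_def is_sgd_def is_graph_def sgd_prod_nat_def by auto

lemma sgd_iso_sgd_prod_nat: "sgd_iso (sgd_prod_nat C D) (sgd_prod C D)"
  unfolding sgd_iso_def
proof (intro exI[of _ prod_decode] conjI)
  show "bij_betw prod_decode (verts (sgd_prod_nat C D)) (verts (sgd_prod C D))"
    unfolding sgd_prod_nat_def sgd_prod_def bij_betw_def inj_on_def by (auto simp: image_iff)
  show "bij_betw prod_decode (edges (sgd_prod_nat C D)) (edges (sgd_prod C D))"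
    unfolding sgd_prod_nat_def sgd_prod_def bij_betw_def inj_on_def by (auto simp: image_iff)
  show "sgd_hom (sgd_prod_nat C D) (sgd_prod C D) prod_decode prod_decode"
    unfolding sgd_hom_def graph_hom_def sgd_prod_nat_def sgd_prod_def by auto
qed

lemma sgd_hom_prod_nat_fst:
    "sgd_hom (sgd_prod_nat C D) C (\<lambda>a. fst (prod_decode a)) (\<lambda>a. fst (prod_decode a))"
  and sgd_hom_prod_nat_snd:
    "sgd_hom (sgd_prod_nat C D) D (\<lambda>a. snd (prod_decode a)) (\<lambda>a. snd (prod_decode a))"
  unfolding sgd_hom_def graph_hom_def sgd_prod_nat_def by auto

section \<open>Every member of gV divides a member of V\<close>

lemma sgd_prod_divides:
  assumes a: "sgd_division S S' f1 \<tau>1" and b: "sgd_division T T' f2 \<tau>2"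
  shows "sgd_divides (sgd_prod S T) (sgd_prod S' T')"
proof -
  let ?\<tau> = "{((s, t), (s', t')) | s t s' t'. (s, s') \<in> \<tau>1 \<and> (t, t') \<in> \<tau>2}"
  have "sgd_division (sgd_prod S T) (sgd_prod S' T') (\<lambda>(x, y). (f1 x, f2 y)) ?\<tau>"
  proof (rule sgd_divisionI)
    show "\<exists>r. (p, r) \<in> ?\<tau>" if p: "p \<in> edges (sgd_prod S T)" for p
    proof -
      obtain s t where p: "p = (s, t)" "s \<in> edges S" "t \<in> edges T"
        using p by (auto simp: sgd_prod_def)
      obtain s' where "(s, s') \<in> \<tau>1" using sgd_divisionD(2)[OF a p(2)] by blast
      moreover obtain t' where "(t, t') \<in> \<tau>2" using sgd_divisionD(2)[OF b p(3)] by blast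
      ultimately show ?thesis using p by blast
    qed
  qed (use sgd_divisionD[OF a] sgd_divisionD[OF b] in \<open>auto simp: sgd_prod_def\<close>)
  then show ?thesis unfolding sgd_divides_iff by blast
qed

lemma sg_as_sgd_prod_divides:
  assumes "fin_sg S" "fin_sg T"
  shows "sgd_divides (sgd_prod (sg_as_sgd S) (sg_as_sgd T)) (sg_as_sgd (sg_prod_nat S T))"
proof -
  have "sgd_division (sgd_prod (sg_as_sgd S) (sg_as_sgd T)) (sg_as_sgd (sg_prod_nat S T)) (\<lambda>_. 0)
          {((a, b), prod_encode (a, b)) | a b. a \<in> fst S \<and> b \<in> fst T}"
    by (rule sgd_divisionI)
      (use assms in \<open>auto simp: sgd_prod_def sg_as_sgd_def sg_prod_nat_def fin_sg_def\<close>)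
  then show ?thesis unfolding sgd_divides_iff by blast
qed

lemma sgd_coprod_divides:
  assumes a: "sgd_division S (sg_as_sgd S1) f1 \<tau>1" and b: "sgd_division T (sg_as_sgd T1) f2 \<tau>2"
    and fa: "fin_sg S1" and fb: "fin_sg T1"
  shows "sgd_divides (sgd_coprod S T) (sg_as_sgd (sg_prod_nat S1 T1))"
proof -
  let ?\<tau> = "{(Inl s, prod_encode (a, b)) | s a b. (s, a) \<in> \<tau>1 \<and> b \<in> fst T1} \<union>
            {(Inr t, prod_encode (a, b)) | t a b. a \<in> fst S1 \<and> (t, b) \<in> \<tau>2}"
  obtain a0 where a0: "a0 \<in> fst S1" using fa unfolding fin_sg_def by auto
  obtain b0 where b0: "b0 \<in> fst T1" using fb unfolding fin_sg_def by auto
  have cS: "\<And>x y. x \<in> fst S1 \<Longrightarrow> y \<in> fst S1 \<Longrightarrow> snd S1 x y \<in> fst S1"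
    and cT: "\<And>x y. x \<in> fst T1 \<Longrightarrow> y \<in> fst T1 \<Longrightarrow> snd T1 x y \<in> fst T1"
    using fa fb unfolding fin_sg_def by auto
  have "sgd_division (sgd_coprod S T) (sg_as_sgd (sg_prod_nat S1 T1)) (\<lambda>_. 0) ?\<tau>"
  proof (rule sgd_divisionI)
    show "\<exists>r. (p, r) \<in> ?\<tau>" if p: "p \<in> edges (sgd_coprod S T)" for p
    proof -
      consider (l) s where "p = Inl s" "s \<in> edges S" | (r) t where "p = Inr t" "t \<in> edges T"
        using p by (auto simp: sgd_coprod_def)
      then show ?thesis
      proof cases
        case l
        obtain a where "(s, a) \<in> \<tau>1" using sgd_divisionD(2)[OF a l(2)] by blast
        then show ?thesis using l b0 by blast
      next
        case r
        obtain b where "(t, b) \<in> \<tau>2" using sgd_divisionD(2)[OF b r(2)] by blast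
        then show ?thesis using r a0 by blast
      qed
    qed
    show "p \<in> edges (sgd_coprod S T) \<and> r \<in> edges (sg_as_sgd (sg_prod_nat S1 T1)) \<and>
         src (sg_as_sgd (sg_prod_nat S1 T1)) r = 0 \<and> tgt (sg_as_sgd (sg_prod_nat S1 T1)) r = 0"
      if "(p, r) \<in> ?\<tau>" for p r
      using that sgd_divisionD(3,4)[OF a] sgd_divisionD(3,4)[OF b]
      by (auto simp: sgd_coprod_def sg_as_sgd_def sg_prod_nat_def)
    show "(mul (sgd_coprod S T) p p', mul (sg_as_sgd (sg_prod_nat S1 T1)) r r') \<in> ?\<tau>"
      if "(p, r) \<in> ?\<tau>" "(p', r') \<in> ?\<tau>" "src (sgd_coprod S T) p = tgt (sgd_coprod S T) p'"
      for p r p' r'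
      using that sgd_divisionD(4,7)[OF a] sgd_divisionD(4,7)[OF b] cS cT
      by (auto simp: sgd_coprod_def sg_as_sgd_def sg_prod_nat_def)
    show "p = p'"
      if "(p, r) \<in> ?\<tau>" "(p', r') \<in> ?\<tau>" "src (sgd_coprod S T) p = src (sgd_coprod S T) p'"
        "tgt (sgd_coprod S T) p = tgt (sgd_coprod S T) p'" "r = r'" for p r p' r'
      using that sgd_divisionD(8)[OF a] sgd_divisionD(8)[OF b]
      by (auto simp: sgd_coprod_def sg_as_sgd_def)
  qed (simp add: sg_as_sgd_def)
  then show ?thesis unfolding sgd_divides_iff by blast
qed

definition sg_divisor_closure :: "nat sg set \<Rightarrow> (nat, nat) sgd set" where
  "sg_divisor_closure V = {C. fin_sgd C \<and> (\<exists>S\<in>V. sgd_divides C (sg_as_sgd S))}"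

lemma fin_sgd_sg_as_sgd: "fin_sg S \<Longrightarrow> fin_sgd (sg_as_sgd S)"
  unfolding fin_sg_def fin_sgd_def is_sgd_def is_graph_def sg_as_sgd_def by auto

lemma sg_as_sgd_divides_self: "fin_sg S \<Longrightarrow> sgd_divides (sg_as_sgd S) (sg_as_sgd S)"
proof -
  assume "fin_sg S"
  then have "sgd_division (sg_as_sgd S) (sg_as_sgd S) id (Id_on (fst S))"
    by (intro sgd_divisionI) (auto simp: sg_as_sgd_def fin_sg_def)
  then show ?thesis unfolding sgd_divides_iff by blast
qed

lemma sg_divisor_closure_prod_closed:
  assumes V: "sg_pvar V" and P: "fin_sgd P" "sgd_iso P (sgd_prod S T)"
    and ST: "S \<in> sg_divisor_closure V" "T \<in> sg_divisor_closure V"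
  shows "P \<in> sg_divisor_closure V"
proof -
  obtain S1 T1 f1 \<tau>1 f2 \<tau>2 where S1: "S1 \<in> V" "sgd_division S (sg_as_sgd S1) f1 \<tau>1"
    and T1: "T1 \<in> V" "sgd_division T (sg_as_sgd T1) f2 \<tau>2"
    using ST unfolding sg_divisor_closure_def sgd_divides_iff by blast
  have "sgd_divides P (sgd_prod S T)"
    using sgd_iso_divides P unfolding fin_sgd_def by blast
  also have "sgd_divides (sgd_prod S T) (sgd_prod (sg_as_sgd S1) (sg_as_sgd T1))"
    using sgd_prod_divides[OF S1(2) T1(2)] .
  also have "sgd_divides \<dots> (sg_as_sgd (sg_prod_nat S1 T1))"
    using sg_as_sgd_prod_divides sg_pvar_fin_sg[OF V] S1(1) T1(1) by blast
  finally show ?thesis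
    using P(1) sg_pvar_prod_nat_closed[OF V S1(1) T1(1)] unfolding sg_divisor_closure_def by blast
qed

lemma sg_divisor_closure_coprod_closed:
  assumes V: "sg_pvar V" and P: "fin_sgd P" "sgd_iso P (sgd_coprod S T)"
    and ST: "S \<in> sg_divisor_closure V" "T \<in> sg_divisor_closure V"
  shows "P \<in> sg_divisor_closure V"
proof -
  obtain S1 T1 f1 \<tau>1 f2 \<tau>2 where S1: "S1 \<in> V" "sgd_division S (sg_as_sgd S1) f1 \<tau>1"
    and T1: "T1 \<in> V" "sgd_division T (sg_as_sgd T1) f2 \<tau>2"
    using ST unfolding sg_divisor_closure_def sgd_divides_iff by blast
  have "sgd_divides P (sgd_coprod S T)"
    using sgd_iso_divides P unfolding fin_sgd_def by blast
  also have "sgd_divides \<dots> (sg_as_sgd (sg_prod_nat S1 T1))"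
    using sgd_coprod_divides[OF S1(2) T1(2)] sg_pvar_fin_sg[OF V] S1(1) T1(1) by blast
  finally show ?thesis
    using P(1) sg_pvar_prod_nat_closed[OF V S1(1) T1(1)] unfolding sg_divisor_closure_def by blast
qed

lemma sgd_pvar_sg_divisor_closure:
  assumes V: "sg_pvar V" shows "sgd_pvar (sg_divisor_closure V)"
proof -
  have triv: "sg_trivial \<in> V" using V unfolding sg_pvar_def by blast
  have "sgd_division sgd_terminal (sg_as_sgd sg_trivial) (\<lambda>_. 0) {(0, 0)}"
    by (rule sgd_divisionI) (auto simp: sgd_terminal_def sg_as_sgd_def sg_trivial_def)
  moreover have "fin_sgd sgd_terminal"
    by (simp add: fin_sgd_def is_sgd_def is_graph_def sgd_terminal_def)
  ultimately have terminal: "sgd_terminal \<in> sg_divisor_closure V"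
    using triv unfolding sg_divisor_closure_def sgd_divides_iff by blast
  have "sgd_division sgd_empty (sg_as_sgd sg_trivial) (\<lambda>_. 0) {}"
    by (rule sgd_divisionI) (auto simp: sgd_empty_def)
  moreover have "fin_sgd sgd_empty" by (simp add: fin_sgd_def is_sgd_def is_graph_def sgd_empty_def)
  ultimately have empty: "sgd_empty \<in> sg_divisor_closure V"
    using triv unfolding sg_divisor_closure_def sgd_divides_iff by blast
  have divisor: "S \<in> sg_divisor_closure V"
    if "fin_sgd S" "T \<in> sg_divisor_closure V" "sgd_divides S T" for S T
    using that sgd_divides_trans unfolding sg_divisor_closure_def by blast
  have "\<forall>S\<in>sg_divisor_closure V. fin_sgd S" unfolding sg_divisor_closure_def by blast
  then show ?thesis
    unfolding sgd_pvar_def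
    using terminal empty divisor sg_divisor_closure_prod_closed[OF V] sg_divisor_closure_coprod_closed[OF V]
    by blast
qed

lemma gV_subset_sg_divisor_closure:
  assumes "sg_pvar V" shows "gV V \<subseteq> sg_divisor_closure V"
proof -
  have "sg_as_sgd ` V \<subseteq> sg_divisor_closure V"
    using assms fin_sgd_sg_as_sgd sg_as_sgd_divides_self
    unfolding sg_divisor_closure_def sg_pvar_def by blast
  then show ?thesis
    unfolding gV_def using sgd_pvar_sg_divisor_closure[OF assms] by (intro Inter_lower) simp
qed

lemma gV_fin_sgd: "sg_pvar V \<Longrightarrow> C \<in> gV V \<Longrightarrow> fin_sgd C"
  using gV_subset_sg_divisor_closure unfolding sg_divisor_closure_def by blast

lemma sg_as_sgd_in_gV: "S \<in> V \<Longrightarrow> sg_as_sgd S \<in> gV V"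
  unfolding gV_def by blast

lemma gV_divisor_closed:
  assumes "fin_sgd S" "T \<in> gV V" "sgd_divides S T" shows "S \<in> gV V"
  unfolding gV_def
proof (rule InterI)
  fix C assume "C \<in> {C. sgd_pvar C \<and> sg_as_sgd ` V \<subseteq> C}"
  then have "sgd_pvar C" "T \<in> C" using assms(2) unfolding gV_def by blast+
  then show "S \<in> C" using assms(1,3) unfolding sgd_pvar_def by blast
qed

lemma gV_prod_closed:
  assumes "fin_sgd P" "S \<in> gV V" "T \<in> gV V" "sgd_iso P (sgd_prod S T)" shows "P \<in> gV V"
  unfolding gV_def
proof (rule InterI)
  fix C assume "C \<in> {C. sgd_pvar C \<and> sg_as_sgd ` V \<subseteq> C}"
  then have "sgd_pvar C" "S \<in> C" "T \<in> C" using assms(2,3) unfolding gV_def by blast+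
  then show "P \<in> C" using assms(1,4) unfolding sgd_pvar_def by blast
qed

lemma sgd_terminal_in_gV: "sgd_terminal \<in> gV V"
  unfolding gV_def sgd_pvar_def by (rule InterI) (elim CollectE conjE)

text \<open>A nonempty word is represented by its first letter a and the list l of the remaining ones;
  word_eval multiplies out its image under \<phi>, bracketed to the right.\<close>

fun word_eval :: "('a \<Rightarrow> 'a \<Rightarrow> 'a) \<Rightarrow> ('x \<Rightarrow> 'a) \<Rightarrow> 'x \<Rightarrow> 'x list \<Rightarrow> 'a" where
  "word_eval m \<phi> a [] = \<phi> a"
| "word_eval m \<phi> a (b # l) = m (\<phi> a) (word_eval m \<phi> b l)"

lemma word_eval_closed:
  assumes "\<And>x y. x \<in> K \<Longrightarrow> y \<in> K \<Longrightarrow> m x y \<in> K" "\<phi> ` X \<subseteq> K" "a \<in> X" "set l \<subseteq> X"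
  shows "word_eval m \<phi> a l \<in> K"
  using assms(3,4) by (induction l arbitrary: a) (use assms(1,2) in auto)

lemma word_eval_append:
  assumes cl: "\<And>x y. x \<in> K \<Longrightarrow> y \<in> K \<Longrightarrow> m x y \<in> K"
    and assoc: "\<And>x y z. x \<in> K \<Longrightarrow> y \<in> K \<Longrightarrow> z \<in> K \<Longrightarrow> m (m x y) z = m x (m y z)"
    and \<phi>: "\<phi> ` X \<subseteq> K" and X: "a \<in> X" "set l1 \<subseteq> X" "b \<in> X" "set l2 \<subseteq> X"
  shows "word_eval m \<phi> a (l1 @ b # l2) = m (word_eval m \<phi> a l1) (word_eval m \<phi> b l2)"
  using X(1,2)
proof (induction l1 arbitrary: a)
  case Nil then show ?case by simp
next
  case (Cons c l1)
  have "word_eval m \<phi> a ((c # l1) @ b # l2) = m (\<phi> a) (m (word_eval m \<phi> c l1) (word_eval m \<phi> b l2))"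
    using Cons by simp
  also have "\<dots> = m (m (\<phi> a) (word_eval m \<phi> c l1)) (word_eval m \<phi> b l2)"
    using assoc word_eval_closed[OF cl \<phi>] Cons.prems X(3,4) \<phi> by auto
  finally show ?case by simp
qed

lemma sg_gen_word_eval:
  assumes "fin_sg S" "\<phi> ` X \<subseteq> fst S" "z \<in> sg_gen (snd S) (\<phi> ` X)"
  shows "\<exists>a l. a \<in> X \<and> set l \<subseteq> X \<and> z = word_eval (snd S) \<phi> a l"
  using assms(3)
proof (induction rule: sg_gen.induct)
  case (base x)
  then obtain a where "a \<in> X" "x = \<phi> a" by blast
  then show ?case by (intro exI[of _ a] exI[of _ "[]"]) simp
next
  case (mult z1 z2)
  obtain a l1 where 1: "a \<in> X" "set l1 \<subseteq> X" "z1 = word_eval (snd S) \<phi> a l1"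
    using mult.IH(1) by blast
  obtain b l2 where 2: "b \<in> X" "set l2 \<subseteq> X" "z2 = word_eval (snd S) \<phi> b l2"
    using mult.IH(2) by blast
  have "snd S z1 z2 = word_eval (snd S) \<phi> a (l1 @ b # l2)"
    using word_eval_append[of "fst S" "snd S" \<phi> X a l1 b l2] assms(1,2) 1 2
    unfolding fin_sg_def by auto
  then show ?case using 1 2 by (intro exI[of _ a] exI[of _ "l1 @ b # l2"]) auto
qed

lemma sg_hom_word_eval:
  assumes "fin_sg S" "sg_hom S T h" "\<phi> ` X \<subseteq> fst S" "\<And>x. x \<in> X \<Longrightarrow> h (\<phi> x) = \<psi> x"
    "a \<in> X" "set l \<subseteq> X"
  shows "h (word_eval (snd S) \<phi> a l) = word_eval (snd T) \<psi> a l"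
  using assms(5,6)
proof (induction l arbitrary: a)
  case Nil then show ?case using assms(4) by simp
next
  case (Cons b l)
  have "word_eval (snd S) \<phi> b l \<in> fst S"
    by (rule word_eval_closed[of "fst S" "snd S" \<phi> X])
      (use assms(1,3) Cons.prems in \<open>auto simp: fin_sg_def\<close>)
  then show ?case using Cons assms(2,3,4) unfolding sg_hom_def sg_hom_on_def by auto
qed

section \<open>Elements of the free pro-V semigroup are locally words\<close>

lemma free_sgD:
  assumes "u \<in> free_sg V X"
  shows "\<And>v. sg_val V X v \<Longrightarrow> u v \<in> sg_gen (snd (fst v)) (snd v ` X)"
    and "\<And>v. \<not> sg_val V X v \<Longrightarrow> u v = 0"
    and "\<And>S \<phi> T \<psi> h. sg_val V X (S, \<phi>) \<Longrightarrow> sg_val V X (T, \<psi>) \<Longrightarrow> sg_hom S T h \<Longrightarrow>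
        (\<forall>x\<in>X. h (\<phi> x) = \<psi> x) \<Longrightarrow> h (u (S, \<phi>)) = u (T, \<psi>)"
  using assms unfolding free_sg_def by blast+

lemma free_sgI:
  assumes "\<And>v. sg_val V X v \<Longrightarrow> u v \<in> sg_gen (snd (fst v)) (snd v ` X)"
    and "\<And>v. \<not> sg_val V X v \<Longrightarrow> u v = 0"
    and "\<And>S \<phi> T \<psi> h. sg_val V X (S, \<phi>) \<Longrightarrow> sg_val V X (T, \<psi>) \<Longrightarrow> sg_hom S T h \<Longrightarrow>
        (\<forall>x\<in>X. h (\<phi> x) = \<psi> x) \<Longrightarrow> h (u (S, \<phi>)) = u (T, \<psi>)"
  shows "u \<in> free_sg V X"
  using assms unfolding free_sg_def by blast

lemma sg_val_common_refinement:
  assumes V: "sg_pvar V" and vs: "\<forall>v\<in>set vs. sg_val V X v"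
  shows "\<exists>T \<psi>. sg_val V X (T, \<psi>) \<and>
    (\<forall>v\<in>set vs. \<exists>h. sg_hom T (fst v) h \<and> (\<forall>x\<in>X. h (\<psi> x) = snd v x))"
  using vs
proof (induction vs)
  case Nil
  have "sg_trivial \<in> V" using V unfolding sg_pvar_def by blast
  then have "sg_val V X (sg_trivial, \<lambda>_. 0)" unfolding sg_val_def sg_trivial_def by auto
  then show ?case by (intro exI[of _ sg_trivial] exI[of _ "\<lambda>_. 0"]) simp
next
  case (Cons v vs)
  obtain T' \<psi>' where T': "sg_val V X (T', \<psi>')"
    "\<forall>v\<in>set vs. \<exists>h. sg_hom T' (fst v) h \<and> (\<forall>x\<in>X. h (\<psi>' x) = snd v x)" using Cons by auto
  have v: "fst v \<in> V" "snd v ` X \<subseteq> fst (fst v)" using Cons.prems unfolding sg_val_def by auto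
  let ?T = "sg_prod_nat (fst v) T'"
  let ?\<psi> = "\<lambda>x. prod_encode (snd v x, \<psi>' x)"
  have "?T \<in> V" using sg_pvar_prod_nat_closed[OF V v(1)] T'(1) unfolding sg_val_def by auto
  moreover have "?\<psi> ` X \<subseteq> fst ?T" using T'(1) v(2) unfolding sg_val_def sg_prod_nat_def by auto
  ultimately have "sg_val V X (?T, ?\<psi>)" unfolding sg_val_def by simp
  moreover have "\<exists>h. sg_hom ?T (fst w) h \<and> (\<forall>x\<in>X. h (?\<psi> x) = snd w x)"
    if w: "w \<in> set (v # vs)" for w
  proof (cases "w = v")
    case True
    then show ?thesis using sg_hom_prod_nat_fst[of "fst v" T'] by auto
  next
    case False
    then obtain h where h: "sg_hom T' (fst w) h" "\<forall>x\<in>X. h (\<psi>' x) = snd w x" using T'(2) w by auto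
    show ?thesis
      using sg_hom_comp[OF sg_hom_prod_nat_snd[of "fst v" T'] h(1)] h(2)
      by (intro exI[of _ "h \<circ> (\<lambda>a. snd (prod_decode a))"]) auto
  qed
  ultimately show ?case by blast
qed

text \<open>Evaluate u at a common refinement of the given valuations.\<close>

lemma free_sg_word_eval:
  assumes V: "sg_pvar V" and u: "u \<in> free_sg V X" and vs: "\<forall>v\<in>set vs. sg_val V X v"
  shows "\<exists>a l. a \<in> X \<and> set l \<subseteq> X \<and> (\<forall>v\<in>set vs. u v = word_eval (snd (fst v)) (snd v) a l)"
proof -
  obtain T \<psi> where T: "sg_val V X (T, \<psi>)"
    "\<forall>v\<in>set vs. \<exists>h. sg_hom T (fst v) h \<and> (\<forall>x\<in>X. h (\<psi> x) = snd v x)"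
    using sg_val_common_refinement[OF V vs] by blast
  then have finT: "fin_sg T" and \<psi>: "\<psi> ` X \<subseteq> fst T"
    using sg_pvar_fin_sg[OF V] unfolding sg_val_def by auto
  have "u (T, \<psi>) \<in> sg_gen (snd T) (\<psi> ` X)" using free_sgD(1)[OF u T(1)] by simp
  then obtain a l where w: "a \<in> X" "set l \<subseteq> X" "u (T, \<psi>) = word_eval (snd T) \<psi> a l"
    using sg_gen_word_eval[OF finT \<psi>] by blast
  have "u (S, \<phi>) = word_eval (snd S) \<phi> a l" if v: "(S, \<phi>) \<in> set vs" for S \<phi>
  proof -
    obtain h where h: "sg_hom T S h" "\<forall>x\<in>X. h (\<psi> x) = \<phi> x" using T(2) v by fastforce
    have "h (u (T, \<psi>)) = u (S, \<phi>)" using free_sgD(3)[OF u T(1) _ h] vs v by blast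
    moreover have "h (word_eval (snd T) \<psi> a l) = word_eval (snd S) \<phi> a l"
      by (rule sg_hom_word_eval[OF finT h(1) \<psi>]) (use h(2) w in auto)
    ultimately show ?thesis using w(3) by simp
  qed
  then show ?thesis using w(1,2) by fastforce
qed

fun matching_chain :: "('x \<Rightarrow> bool) \<Rightarrow> ('x \<Rightarrow> bool) \<Rightarrow> 'x \<Rightarrow> 'x list \<Rightarrow> bool" where
  "matching_chain P Q a [] = True"
| "matching_chain P Q a (b # l) = (Q a = P b \<and> matching_chain P Q b l)"

lemma B2_mul:
  "snd B2 (Some (p, r)) (Some (s, q)) = (if r = s then Some (p, q) else None)"
  "snd B2 None x = None" "snd B2 x None = None"
  unfolding B2_def by (auto split: option.splits)

lemma word_eval_B2:
  "word_eval (snd B2) (\<lambda>e. Some (P e, Q e)) a l =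
    (if matching_chain P Q a l then Some (P a, Q (last (a # l))) else None)"
  by (induction l arbitrary: a) (auto simp: B2_mul)

fun graph_path :: "('v, 'e) sgraph \<Rightarrow> 'e \<Rightarrow> 'e list \<Rightarrow> bool" where
  "graph_path A a [] = True"
| "graph_path A a (b # l) = (src A a = tgt A b \<and> graph_path A b l)"

lemma graph_path_if_matching_chains:
  assumes "is_graph A" "a \<in> edges A" "set l \<subseteq> edges A"
    "\<forall>x\<in>verts A. matching_chain (\<lambda>e. tgt A e = x) (\<lambda>e. src A e = x) a l"
  shows "graph_path A a l"
  using assms(2-4)
proof (induction l arbitrary: a)
  case Nil then show ?case by simp
next
  case (Cons b l)
  have "src A a \<in> verts A" using assms(1) Cons.prems(1) unfolding is_graph_def by blast
  then have "src A a = tgt A b" using Cons.prems(3) by fastforce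
  then show ?case using Cons by auto
qed

lemma fin_sg_B2: "fin_sg B2"
  unfolding fin_sg_def B2_def by (auto split: option.splits)

lemma sg_iso_inverse_hom:
  assumes "fin_sg S" "sg_iso S T"
  shows "\<exists>g. sg_hom T S g \<and> inj_on g (fst T)"
proof -
  obtain h where h: "bij_betw h (fst S) (fst T)" "sg_hom S T h" using assms(2) unfolding sg_iso_def by blast
  define g where "g = inv_into (fst S) h"
  have g: "g z \<in> fst S" "h (g z) = z" if "z \<in> fst T" for z
    using that h(1) unfolding g_def bij_betw_def by (auto intro: inv_into_into f_inv_into_f)
  have "g (snd T z1 z2) = snd S (g z1) (g z2)" if "z1 \<in> fst T" "z2 \<in> fst T" for z1 z2
  proof -
    have gS: "snd S (g z1) (g z2) \<in> fst S" using assms(1) g that unfolding fin_sg_def by blast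
    have "h (snd S (g z1) (g z2)) = snd T z1 z2"
      using h(2) g that unfolding sg_hom_def sg_hom_on_def by simp
    then show ?thesis
      using gS h(1) unfolding g_def bij_betw_def by (metis inv_into_f_f)
  qed
  moreover have "inj_on g (fst T)" using g by (metis inj_onI)
  ultimately show ?thesis using g unfolding sg_hom_def sg_hom_on_def by blast
qed

lemma fst_B2: "fst B2 = UNIV"
  by (simp add: B2_def)

lemma B2_embeds_into_pvar:
  assumes "sg_pvar V" "contains_B2 V"
  shows "\<exists>S g. S \<in> V \<and> sg_hom B2 S g \<and> inj g"
  using assms sg_iso_inverse_hom[OF sg_pvar_fin_sg] fst_B2 unfolding contains_B2_def by metis

lemma is_sgdD:
  assumes "is_sgd C" "s \<in> edges C" "t \<in> edges C" "src C s = tgt C t"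
  shows "mul C s t \<in> edges C" "src C (mul C s t) = src C t" "tgt C (mul C s t) = tgt C s"
  using assms unfolding is_sgd_def by blast+

lemma word_eval_sgd:
  assumes C: "is_sgd C" and g: "graph_hom A C fv fe"
    and a: "a \<in> edges A" "set l \<subseteq> edges A" "graph_path A a l"
  shows "word_eval (mul C) fe a l \<in> edges C \<and> word_eval (mul C) fe a l \<in> sgd_gen C (fe ` edges A) \<and>
    src C (word_eval (mul C) fe a l) = fv (src A (last (a # l))) \<and>
    tgt C (word_eval (mul C) fe a l) = fv (tgt A a)"
  using a
proof (induction l arbitrary: a)
  case Nil then show ?case using g unfolding graph_hom_def by (auto intro: sgd_gen.base)
next
  case (Cons b l)
  let ?w = "word_eval (mul C) fe b l"
  have IH: "?w \<in> edges C" "?w \<in> sgd_gen C (fe ` edges A)" "src C ?w = fv (src A (last (b # l)))"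
    "tgt C ?w = fv (tgt A b)" using Cons by auto
  have a: "fe a \<in> edges C" "src C (fe a) = fv (src A a)" "tgt C (fe a) = fv (tgt A a)"
    using g Cons.prems unfolding graph_hom_def by auto
  have comp: "src C (fe a) = tgt C ?w" using a IH Cons.prems by simp
  have "fe a \<in> sgd_gen C (fe ` edges A)" using Cons.prems by (auto intro: sgd_gen.base)
  then show ?case using is_sgdD[OF C a(1) IH(1) comp] IH a sgd_gen.mult[OF _ IH(2) comp] by simp
qed

lemma sgd_hom_word_eval:
  assumes C: "is_sgd C" and g: "graph_hom A C fv fe" and h: "sgd_hom C T hv he"
    and he: "\<And>e. e \<in> edges A \<Longrightarrow> he (fe e) = ge e"
    and a: "a \<in> edges A" "set l \<subseteq> edges A" "graph_path A a l"
  shows "he (word_eval (mul C) fe a l) = word_eval (mul T) ge a l"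
  using a
proof (induction l arbitrary: a)
  case Nil then show ?case using he by simp
next
  case (Cons b l)
  let ?w = "word_eval (mul C) fe b l"
  have w: "?w \<in> edges C" "tgt C ?w = fv (tgt A b)"
    using word_eval_sgd[OF C g, of b l] Cons.prems by auto
  have a: "fe a \<in> edges C" "src C (fe a) = fv (src A a)"
    using g Cons.prems unfolding graph_hom_def by auto
  have "he (mul C (fe a) ?w) = mul T (he (fe a)) (he ?w)"
    using h w a Cons.prems unfolding sgd_hom_def by auto
  then show ?case using Cons he by simp
qed

lemma sgd_division_word_eval:
  assumes C: "is_sgd C" and g: "graph_hom A C fv fe" and d: "sgd_division C (sg_as_sgd S) f \<tau>"
    and \<tau>: "\<And>e. e \<in> edges A \<Longrightarrow> (fe e, \<phi> e) \<in> \<tau>"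
    and a: "a \<in> edges A" "set l \<subseteq> edges A" "graph_path A a l"
  shows "(word_eval (mul C) fe a l, word_eval (snd S) \<phi> a l) \<in> \<tau>"
  using a
proof (induction l arbitrary: a)
  case Nil then show ?case using \<tau> by simp
next
  case (Cons b l)
  let ?w = "word_eval (mul C) fe b l"
  have "tgt C ?w = fv (tgt A b)" using word_eval_sgd[OF C g, of b l] Cons.prems by auto
  moreover have "src C (fe a) = fv (src A a)" using g Cons.prems unfolding graph_hom_def by auto
  moreover have "(?w, word_eval (snd S) \<phi> b l) \<in> \<tau>" using Cons by auto
  ultimately show ?case using sgd_divisionD(7)[OF d \<tau>[of a]] Cons.prems by (simp add: sg_as_sgd_def)
qed

lemma sgd_gen_subset_edges:
  assumes "is_sgd C" "graph_hom A C fv fe" shows "sgd_gen C (fe ` edges A) \<subseteq> edges C"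
proof
  fix z assume "z \<in> sgd_gen C (fe ` edges A)"
  then show "z \<in> edges C"
  proof (induction rule: sgd_gen.induct)
    case (base e) then show ?case using assms(2) unfolding graph_hom_def by auto
  next
    case (mult s t) then show ?case using is_sgdD(1)[OF assms(1)] by blast
  qed
qed

lemma sgd_gen_prod_nat_in_division:
  assumes d: "sgd_division C (sg_as_sgd S) f \<tau>" and Y: "\<forall>y\<in>Y. prod_decode y \<in> \<tau>"
    and z: "z \<in> sgd_gen (sgd_prod_nat C (sg_as_sgd S)) Y"
  shows "prod_decode z \<in> \<tau>"
  using z
proof (induction rule: sgd_gen.induct)
  case (base y) then show ?case using Y by blast
next
  case (mult z1 z2)
  obtain c1 s1 where 1: "prod_decode z1 = (c1, s1)" by (cases "prod_decode z1")
  obtain c2 s2 where 2: "prod_decode z2 = (c2, s2)" by (cases "prod_decode z2")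
  have "src C c1 = tgt C c2" using mult.hyps(3) 1 2 by (simp add: sgd_prod_nat_def sg_as_sgd_def)
  then have "(mul C c1 c2, mul (sg_as_sgd S) s1 s2) \<in> \<tau>"
    using sgd_divisionD(7)[OF d] mult.IH 1 2 by simp
  then show ?case using 1 2 by (simp add: sgd_prod_nat_def)
qed

lemma sgd_gen_sg_as_sgd: "sgd_gen (sg_as_sgd S) Y = sg_gen (snd S) Y"
proof (intro equalityI subsetI)
  fix z assume "z \<in> sgd_gen (sg_as_sgd S) Y"
  then show "z \<in> sg_gen (snd S) Y"
    by (induction rule: sgd_gen.induct) (auto simp: sg_as_sgd_def intro: sg_gen.intros)
next
  fix z assume "z \<in> sg_gen (snd S) Y"
  then show "z \<in> sgd_gen (sg_as_sgd S) Y"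
  proof (induction rule: sg_gen.induct)
    case (base x) then show ?case by (rule sgd_gen.base)
  next
    case (mult a b)
    have "mul (sg_as_sgd S) a b \<in> sgd_gen (sg_as_sgd S) Y"
      by (rule sgd_gen.mult[OF mult.IH]) (simp add: sg_as_sgd_def)
    then show ?case by (simp add: sg_as_sgd_def)
  qed
qed

lemma sgd_hom_sg_as_sgd: "sg_hom S T h \<Longrightarrow> sgd_hom (sg_as_sgd S) (sg_as_sgd T) (\<lambda>_. 0) h"
  unfolding sg_hom_def sg_hom_on_def sgd_hom_def graph_hom_def sg_as_sgd_def by auto

lemma free_sgd_edgesD:
  assumes "(x, y, w) \<in> free_sgd_edges C A"
  shows "x \<in> verts A" "y \<in> verts A"
    and "\<And>S fv fe. sgd_val C A (S, fv, fe) \<Longrightarrow> w (S, fv, fe) \<in> sgd_gen S (fe ` edges A)"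
    and "\<And>S fv fe. sgd_val C A (S, fv, fe) \<Longrightarrow> src S (w (S, fv, fe)) = fv x"
    and "\<And>S fv fe. sgd_val C A (S, fv, fe) \<Longrightarrow> tgt S (w (S, fv, fe)) = fv y"
    and "\<And>v. \<not> sgd_val C A v \<Longrightarrow> w v = 0"
    and "\<And>S fv fe T gv ge hv he. sgd_val C A (S, fv, fe) \<Longrightarrow> sgd_val C A (T, gv, ge) \<Longrightarrow>
        sgd_hom S T hv he \<Longrightarrow> (\<forall>x\<in>verts A. hv (fv x) = gv x) \<Longrightarrow> (\<forall>e\<in>edges A. he (fe e) = ge e)
        \<Longrightarrow> he (w (S, fv, fe)) = w (T, gv, ge)"
  using assms unfolding free_sgd_edges_def mem_Collect_eq prod.case by blast+

lemma free_sgd_edgesI: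
  assumes "x \<in> verts A" "y \<in> verts A"
    and "\<And>S fv fe. sgd_val C A (S, fv, fe) \<Longrightarrow> w (S, fv, fe) \<in> sgd_gen S (fe ` edges A)"
    and "\<And>S fv fe. sgd_val C A (S, fv, fe) \<Longrightarrow> src S (w (S, fv, fe)) = fv x"
    and "\<And>S fv fe. sgd_val C A (S, fv, fe) \<Longrightarrow> tgt S (w (S, fv, fe)) = fv y"
    and "\<And>v. \<not> sgd_val C A v \<Longrightarrow> w v = 0"
    and "\<And>S fv fe T gv ge hv he. sgd_val C A (S, fv, fe) \<Longrightarrow> sgd_val C A (T, gv, ge) \<Longrightarrow>
        sgd_hom S T hv he \<Longrightarrow> (\<forall>x\<in>verts A. hv (fv x) = gv x) \<Longrightarrow> (\<forall>e\<in>edges A. he (fe e) = ge e)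
        \<Longrightarrow> he (w (S, fv, fe)) = w (T, gv, ge)"
  shows "(x, y, w) \<in> free_sgd_edges C A"
  unfolding free_sgd_edges_def mem_Collect_eq prod.case using assms by blast

text \<open>The complete graph on the vertices 0 and 1, the edge from x to y being 2 * y + x.\<close>

definition sgd_K2 :: "(nat, nat) sgd" where
  "sgd_K2 = \<lparr>verts = {0, 1}, edges = {0, 1, 2, 3}, src = (\<lambda>e. e mod 2), tgt = (\<lambda>e. e div 2),
         mul = (\<lambda>a b. 2 * (a div 2) + b mod 2)\<rparr>"

lemma fin_sgd_K2: "fin_sgd sgd_K2"
  unfolding fin_sgd_def is_sgd_def is_graph_def sgd_K2_def by auto

lemma sgd_K2_edge: "e \<in> edges sgd_K2 \<Longrightarrow> e = 2 * tgt sgd_K2 e + src sgd_K2 e"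
  unfolding sgd_K2_def by auto

lemma sgd_K2_in_gV: "sgd_K2 \<in> gV V"
proof -
  have "sgd_division sgd_K2 sgd_terminal (\<lambda>_. 0) (edges sgd_K2 \<times> {0})"
  proof (rule sgd_divisionI)
    show "s = s'" if "(s, t) \<in> edges sgd_K2 \<times> {0}" "(s', t') \<in> edges sgd_K2 \<times> {0}"
      "src sgd_K2 s = src sgd_K2 s'" "tgt sgd_K2 s = tgt sgd_K2 s'" "t = t'" for s t s' t'
      using that sgd_K2_edge by (metis SigmaD1)
  qed (auto simp: sgd_K2_def sgd_terminal_def)
  then show ?thesis
    using gV_divisor_closed[OF fin_sgd_K2 sgd_terminal_in_gV] unfolding sgd_divides_iff by blast
qed

lemma openin_topology_generated_by_Inter:
  assumes "T \<in> B" "finite F" "F \<subseteq> B"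
  shows "openin (topology_generated_by B) (T \<inter> \<Inter>F)"
  using assms(2,3)
proof (induction F rule: finite_induct)
  case empty then show ?case using topology_generated_by_Basis[OF assms(1)] by simp
next
  case (insert b F)
  have "T \<inter> \<Inter>(insert b F) = b \<inter> (T \<inter> \<Inter>F)" by auto
  then show ?case using insert topology_generated_by_Basis[of b B] by (simp add: openin_Int)
qed

lemma openin_topology_generated_by_nhdE:
  assumes "openin (topology_generated_by B) N" "p \<in> N"
  obtains F where "finite F" "F \<subseteq> B" "p \<in> \<Inter>F" "\<Inter>F \<subseteq> N"
proof -
  have "generate_topology_on B N" using assms(1) by (rule openin_topology_generated_by)
  then have "\<exists>F. finite F \<and> F \<subseteq> B \<and> p \<in> \<Inter>F \<and> \<Inter>F \<subseteq> N" using assms(2)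
  proof (induction arbitrary: p rule: generate_topology_on.induct)
    case (Int a b)
    obtain F1 where F1: "finite F1" "F1 \<subseteq> B" "p \<in> \<Inter>F1" "\<Inter>F1 \<subseteq> a"
      using Int.IH(1)[of p] Int.prems by blast
    obtain F2 where F2: "finite F2" "F2 \<subseteq> B" "p \<in> \<Inter>F2" "\<Inter>F2 \<subseteq> b"
      using Int.IH(2)[of p] Int.prems by blast
    have "\<Inter>(F1 \<union> F2) \<subseteq> a \<inter> b" using F1(4) F2(4) by auto
    then show ?case using F1(1-3) F2(1-3) by (intro exI[of _ "F1 \<union> F2"]) auto
  next
    case (UN K)
    then obtain k where k: "k \<in> K" "p \<in> k" by blast
    from UN.IH[OF k] obtain F where F: "finite F" "F \<subseteq> B" "p \<in> \<Inter>F" "\<Inter>F \<subseteq> k"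
      by blast
    have "\<Inter>F \<subseteq> \<Union>K" using F(4) k(1) by blast
    then show ?case using F(1-3) by blast
  next
    case (Basis s)
    then show ?case by (intro exI[of _ "{s}"]) auto
  qed simp
  with that show ?thesis by blast
qed

lemma free_sg_nhd_open:
  assumes "finite Gs"
  shows "openin (free_sg_top V X) {u \<in> free_sg V X. \<forall>g\<in>Gs. u g = u0 g}"
proof -
  have "openin (free_sg_top V X) (free_sg V X \<inter> \<Inter>((\<lambda>g. {u \<in> free_sg V X. u g = u0 g}) ` Gs))"
    unfolding free_sg_top_def by (rule openin_topology_generated_by_Inter) (use assms in auto)
  moreover have "free_sg V X \<inter> \<Inter>((\<lambda>g. {u \<in> free_sg V X. u g = u0 g}) ` Gs) =
      {u \<in> free_sg V X. \<forall>g\<in>Gs. u g = u0 g}" by auto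
  ultimately show ?thesis by simp
qed

lemma free_sg_nhd_subsetE:
  assumes "openin (free_sg_top V X) N" "p \<in> N"
  obtains Gs where "finite Gs" "{u \<in> free_sg V X. \<forall>g\<in>Gs. u g = p g} \<subseteq> N"
proof -
  let ?FS = "free_sg V X"
  obtain F where F: "finite F" and FB: "F \<subseteq> insert ?FS {{u \<in> ?FS. u v = n} | v n. True}"
    and pN: "p \<in> \<Inter>F" "\<Inter>F \<subseteq> N"
    by (rule openin_topology_generated_by_nhdE[OF assms[unfolded free_sg_top_def]])
  have "\<forall>b\<in>F. \<exists>g. {u \<in> ?FS. u g = p g} \<subseteq> b"
  proof
    fix b assume b: "b \<in> F"
    have p: "p \<in> b" by (rule InterD[OF pN(1) b])
    from subsetD[OF FB b] consider "b = ?FS" | v n where "b = {u \<in> ?FS. u v = n}"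
      by blast
    then show "\<exists>g. {u \<in> ?FS. u g = p g} \<subseteq> b"
    proof cases
      case 1
      then show ?thesis by blast
    next
      case (2 v n)
      then have "n = p v" using p by simp
      then show ?thesis unfolding 2 by blast
    qed
  qed
  then obtain c where c: "\<forall>b\<in>F. {u \<in> ?FS. u (c b) = p (c b)} \<subseteq> b"
    by (rule bchoice[THEN exE])
  have "{u \<in> ?FS. \<forall>g\<in>c ` F. u g = p g} \<subseteq> \<Inter>F" using c by blast
  then show ?thesis using that[of "c ` F"] F pN(2) by blast
qed

definition sgd_nhd :: "(nat, nat) sgd set \<Rightarrow> ('v, 'e) sgraph \<Rightarrow> 'v \<times> 'v \<times> (('v, 'e) sgd_val \<Rightarrow> nat)
     \<Rightarrow> ('v, 'e) sgd_val set \<Rightarrow> ('v \<times> 'v \<times> (('v, 'e) sgd_val \<Rightarrow> nat)) set" where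
  "sgd_nhd C A p F = {e \<in> free_sgd_edges C A. fst e = fst p \<and> fst (snd e) = fst (snd p) \<and>
      (\<forall>v\<in>F. snd (snd e) v = snd (snd p) v)}"

lemma sgd_nhd_open:
  assumes "finite F"
  shows "openin (free_sgd_top C A) (sgd_nhd C A p F)"
proof -
  let ?E = "free_sgd_edges C A"
  let ?F = "insert {e \<in> ?E. fst e = fst p} (insert {e \<in> ?E. fst (snd e) = fst (snd p)}
            ((\<lambda>v. {e \<in> ?E. snd (snd e) v = snd (snd p) v}) ` F))"
  have "openin (free_sgd_top C A) (?E \<inter> \<Inter>?F)"
    unfolding free_sgd_top_def by (rule openin_topology_generated_by_Inter) (use assms in blast)+
  moreover have "?E \<inter> \<Inter>?F = sgd_nhd C A p F" unfolding sgd_nhd_def by auto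
  ultimately show ?thesis by simp
qed

lemma sgd_nhd_subset_basic:
  assumes b: "b \<in> insert (free_sgd_edges C A)
      ({{e \<in> free_sgd_edges C A. fst e = x} | x. True} \<union> {{e \<in> free_sgd_edges C A. fst (snd e) = y} | y. True} \<union>
       {{e \<in> free_sgd_edges C A. snd (snd e) v = n} | v n. True})"
    and p: "p \<in> b"
  shows "\<exists>v. sgd_nhd C A p {v} \<subseteq> b"
proof -
  let ?E = "free_sgd_edges C A"
  from b consider "b = ?E" | x where "b = {e \<in> ?E. fst e = x}"
    | y where "b = {e \<in> ?E. fst (snd e) = y}" | v n where "b = {e \<in> ?E. snd (snd e) v = n}"
    unfolding insert_iff Un_iff mem_Collect_eq by metis
  then show ?thesis
  proof cases
    case 1
    have "sgd_nhd C A p {v} \<subseteq> ?E" for v unfolding sgd_nhd_def by blast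
    then show ?thesis unfolding 1 by blast
  next
    case (2 x)
    then have "x = fst p" using p by simp
    have "sgd_nhd C A p {v} \<subseteq> {e \<in> ?E. fst e = fst p}" for v unfolding sgd_nhd_def by blast
    then show ?thesis unfolding 2 \<open>x = fst p\<close> by blast
  next
    case (3 y)
    then have "y = fst (snd p)" using p by simp
    have "sgd_nhd C A p {v} \<subseteq> {e \<in> ?E. fst (snd e) = fst (snd p)}" for v
      unfolding sgd_nhd_def by blast
    then show ?thesis unfolding 3 \<open>y = fst (snd p)\<close> by blast
  next
    case (4 v n)
    then have "n = snd (snd p) v" using p by simp
    have "sgd_nhd C A p {v} \<subseteq> {e \<in> ?E. snd (snd e) v = snd (snd p) v}"
      unfolding sgd_nhd_def by blast
    then show ?thesis unfolding 4 \<open>n = snd (snd p) v\<close> by blast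
  qed
qed

lemma sgd_nhd_subsetE:
  assumes "openin (free_sgd_top C A) N" "p \<in> N"
  obtains F where "finite F" "sgd_nhd C A p F \<subseteq> N"
proof -
  obtain F where F: "finite F"
    and FB: "F \<subseteq> insert (free_sgd_edges C A)
      ({{e \<in> free_sgd_edges C A. fst e = x} | x. True} \<union> {{e \<in> free_sgd_edges C A. fst (snd e) = y} | y. True} \<union>
       {{e \<in> free_sgd_edges C A. snd (snd e) v = n} | v n. True})"
    and pN: "p \<in> \<Inter>F" "\<Inter>F \<subseteq> N"
    by (rule openin_topology_generated_by_nhdE[OF assms[unfolded free_sgd_top_def]])
  have "\<forall>b\<in>F. \<exists>v. sgd_nhd C A p {v} \<subseteq> b"
    using sgd_nhd_subset_basic[OF subsetD[OF FB] InterD[OF pN(1)]] by blast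
  then obtain c where c: "\<forall>b\<in>F. sgd_nhd C A p {c b} \<subseteq> b"
    by (rule bchoice[THEN exE])
  have "sgd_nhd C A p (c ` F) \<subseteq> \<Inter>F"
  proof
    fix e assume "e \<in> sgd_nhd C A p (c ` F)"
    then have "e \<in> sgd_nhd C A p {c b}" if "b \<in> F" for b
      using that unfolding sgd_nhd_def by blast
    then show "e \<in> \<Inter>F" using c by blast
  qed
  then show ?thesis using that[of "c ` F"] F pN(2) by blast
qed

definition one_vertex_val :: "nat sg \<times> ('e \<Rightarrow> nat) \<Rightarrow> ('v, 'e) sgd_val" where
  "one_vertex_val v = (sg_as_sgd (fst v), \<lambda>_. 0, snd v)"

locale gV_B2 =
  fixes A :: "('v, 'e) sgraph" and V :: "nat sg set"
  assumes graph: "is_graph A" and finite_verts: "finite (verts A)"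
    and pvar: "sg_pvar V" and B2_in_V: "contains_B2 V"
begin

abbreviation "X \<equiv> edges A"
abbreviation "E \<equiv> free_sgd_edges (gV V) A"

definition to_free_sg :: "'v \<times> 'v \<times> (('v, 'e) sgd_val \<Rightarrow> nat) \<Rightarrow> nat sg \<times> ('e \<Rightarrow> nat) \<Rightarrow> nat" where
  "to_free_sg s = (\<lambda>v. if sg_val V X v then snd (snd s) (one_vertex_val v) else 0)"

lemma gV_is_sgd: "C \<in> gV V \<Longrightarrow> is_sgd C"
  using gV_fin_sgd[OF pvar] unfolding fin_sgd_def by blast

lemma sgd_val_sg_as_sgd: "sg_val V X (S, \<phi>) \<Longrightarrow> sgd_val (gV V) A (sg_as_sgd S, \<lambda>_. 0, \<phi>)"
  using sg_as_sgd_in_gV unfolding sg_val_def sgd_val_def graph_hom_def sg_as_sgd_def by auto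

lemma to_free_sg_eval: "sg_val V X (S, \<phi>) \<Longrightarrow> to_free_sg (x, y, w) (S, \<phi>) = w (sg_as_sgd S, \<lambda>_. 0, \<phi>)"
  by (simp add: to_free_sg_def one_vertex_val_def)

lemma to_free_sg_in_free_sg:
  assumes s: "(x, y, w) \<in> E" shows "to_free_sg (x, y, w) \<in> free_sg V X"
proof (rule free_sgI)
  fix v assume v: "sg_val V X v"
  obtain S \<phi> where v': "v = (S, \<phi>)" by (cases v)
  have "w (sg_as_sgd S, \<lambda>_. 0, \<phi>) \<in> sgd_gen (sg_as_sgd S) (\<phi> ` X)"
    using free_sgd_edgesD(3)[OF s sgd_val_sg_as_sgd] v v' by blast
  then show "to_free_sg (x, y, w) v \<in> sg_gen (snd (fst v)) (snd v ` X)"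
    using v v' by (simp add: to_free_sg_eval sgd_gen_sg_as_sgd)
next
  fix v assume "\<not> sg_val V X v" then show "to_free_sg (x, y, w) v = 0" by (simp add: to_free_sg_def)
next
  fix S \<phi> T \<psi> h
  assume a: "sg_val V X (S, \<phi>)" "sg_val V X (T, \<psi>)" "sg_hom S T h" "\<forall>x\<in>X. h (\<phi> x) = \<psi> x"
  have "h (w (sg_as_sgd S, \<lambda>_. 0, \<phi>)) = w (sg_as_sgd T, \<lambda>_. 0, \<psi>)"
    by (rule free_sgd_edgesD(7)[OF s sgd_val_sg_as_sgd[OF a(1)] sgd_val_sg_as_sgd[OF a(2)]
          sgd_hom_sg_as_sgd[OF a(3)]]) (use a(4) in auto)
  then show "h (to_free_sg (x, y, w) (S, \<phi>)) = to_free_sg (x, y, w) (T, \<psi>)"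
    using a by (simp add: to_free_sg_eval)
qed

lemma free_sgd_edges_composable:
  assumes s: "(x, y, w) \<in> E" and t: "(x', y', w') \<in> E" and comp: "x = y'"
    and v: "sgd_val (gV V) A (S, fv, fe)"
  shows "w (S, fv, fe) \<in> edges S" "w' (S, fv, fe) \<in> edges S"
    "src S (w (S, fv, fe)) = tgt S (w' (S, fv, fe))"
proof -
  have "is_sgd S" "graph_hom A S fv fe" using v gV_is_sgd unfolding sgd_val_def by auto
  then show "w (S, fv, fe) \<in> edges S" "w' (S, fv, fe) \<in> edges S"
    using free_sgd_edgesD(3)[OF s v] free_sgd_edgesD(3)[OF t v] sgd_gen_subset_edges by blast+
  show "src S (w (S, fv, fe)) = tgt S (w' (S, fv, fe))"
    using free_sgd_edgesD(4)[OF s v] free_sgd_edgesD(5)[OF t v] comp by simp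
qed

lemma free_sgd_mul_in_edges:
  assumes s: "(x, y, w) \<in> E" and t: "(x', y', w') \<in> E" and comp: "x = y'"
  shows "free_sgd_mul (gV V) A (x, y, w) (x', y', w') \<in> E"
  unfolding free_sgd_mul_def fst_conv snd_conv
proof (rule free_sgd_edgesI)
  show "x' \<in> verts A" "y \<in> verts A" using free_sgd_edgesD(1)[OF t] free_sgd_edgesD(2)[OF s] .
next
  fix S fv fe assume v: "sgd_val (gV V) A (S, fv, fe)"
  note st = free_sgd_edges_composable[OF s t comp v]
  have m: "src S (mul S (w (S, fv, fe)) (w' (S, fv, fe))) = fv x'"
    "tgt S (mul S (w (S, fv, fe)) (w' (S, fv, fe))) = fv y"
    using is_sgdD(2,3)[OF _ st] v gV_is_sgd free_sgd_edgesD(4)[OF t v] free_sgd_edgesD(5)[OF s v]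
    unfolding sgd_val_def by auto
  have "mul S (w (S, fv, fe)) (w' (S, fv, fe)) \<in> sgd_gen S (fe ` X)"
    using sgd_gen.mult[OF free_sgd_edgesD(3)[OF s v] free_sgd_edgesD(3)[OF t v] st(3)] .
  with m v show
    "(if sgd_val (gV V) A (S, fv, fe) then mul (fst (S, fv, fe)) (w (S, fv, fe)) (w' (S, fv, fe)) else 0)
      \<in> sgd_gen S (fe ` X)"
    "src S (if sgd_val (gV V) A (S, fv, fe) then mul (fst (S, fv, fe)) (w (S, fv, fe)) (w' (S, fv, fe)) else 0) = fv x'"
    "tgt S (if sgd_val (gV V) A (S, fv, fe) then mul (fst (S, fv, fe)) (w (S, fv, fe)) (w' (S, fv, fe)) else 0) = fv y"
    by simp_all
next
  fix v assume "\<not> sgd_val (gV V) A v"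
  then show "(if sgd_val (gV V) A v then mul (fst v) (w v) (w' v) else 0) = 0" by simp
next
  fix S fv fe T gv ge hv he
  assume v: "sgd_val (gV V) A (S, fv, fe)" and v': "sgd_val (gV V) A (T, gv, ge)"
    and h: "sgd_hom S T hv he"
    and hv: "\<forall>x\<in>verts A. hv (fv x) = gv x" and he: "\<forall>e\<in>edges A. he (fe e) = ge e"
  have "he (mul S (w (S, fv, fe)) (w' (S, fv, fe))) = mul T (he (w (S, fv, fe))) (he (w' (S, fv, fe)))"
    using h free_sgd_edges_composable[OF s t comp v] unfolding sgd_hom_def by blast
  also have "\<dots> = mul T (w (T, gv, ge)) (w' (T, gv, ge))"
    using free_sgd_edgesD(7)[OF s v v' h hv he] free_sgd_edgesD(7)[OF t v v' h hv he] by simp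
  finally show "he (if sgd_val (gV V) A (S, fv, fe) then mul (fst (S, fv, fe)) (w (S, fv, fe)) (w' (S, fv, fe)) else 0) =
       (if sgd_val (gV V) A (T, gv, ge) then mul (fst (T, gv, ge)) (w (T, gv, ge)) (w' (T, gv, ge)) else 0)"
    using v v' by simp
qed

lemma to_free_sg_mul:
  shows "to_free_sg (free_sgd_mul (gV V) A (x, y, w) (x', y', w')) =
    free_sg_mul V X (to_free_sg (x, y, w)) (to_free_sg (x', y', w'))"
proof
  fix v
  show "to_free_sg (free_sgd_mul (gV V) A (x, y, w) (x', y', w')) v =
      free_sg_mul V X (to_free_sg (x, y, w)) (to_free_sg (x', y', w')) v"
  proof (cases "sg_val V X v")
    case True
    obtain S \<phi> where v: "v = (S, \<phi>)" by (cases v)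
    then show ?thesis using True sgd_val_sg_as_sgd[of S \<phi>]
      by (simp add: to_free_sg_def one_vertex_val_def free_sgd_mul_def free_sg_mul_def sg_as_sgd_def)
  next
    case False
    then show ?thesis by (simp add: to_free_sg_def free_sg_mul_def)
  qed
qed


subsection \<open>B2 recovers the endpoints\<close>

definition B2_sg :: "nat sg" where
  "B2_sg = fst (SOME (S, g). S \<in> V \<and> sg_hom B2 S g \<and> inj g)"

definition B2_embed :: "(bool \<times> bool) option \<Rightarrow> nat" where
  "B2_embed = snd (SOME (S, g). S \<in> V \<and> sg_hom B2 S g \<and> inj g)"

lemma B2_embedding: "B2_sg \<in> V" "sg_hom B2 B2_sg B2_embed" "inj B2_embed"
proof -
  have "\<exists>p. case p of (S, g) \<Rightarrow> S \<in> V \<and> sg_hom B2 S g \<and> inj g"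
    using B2_embeds_into_pvar[OF pvar B2_in_V] by auto
  then have "case (SOME p. case p of (S, g) \<Rightarrow> S \<in> V \<and> sg_hom B2 S g \<and> inj g) of
      (S, g) \<Rightarrow> S \<in> V \<and> sg_hom B2 S g \<and> inj g" by (rule someI_ex)
  then show "B2_sg \<in> V" "sg_hom B2 B2_sg B2_embed" "inj B2_embed"
    unfolding B2_sg_def B2_embed_def by (auto split: prod.splits)
qed

lemma B2_embed_in: "B2_embed z \<in> fst B2_sg"
  using B2_embedding(2) fst_B2 unfolding sg_hom_def sg_hom_on_def by blast

lemma B2_embed_mul: "B2_embed (snd B2 z1 z2) = snd B2_sg (B2_embed z1) (B2_embed z2)"
  using B2_embedding(2) fst_B2 unfolding sg_hom_def sg_hom_on_def by blast

text \<open>A word has nonzero value under this valuation iff for any two consecutive letters a b,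
  src a = x exactly when tgt b = x.\<close>

definition B2_incidence :: "'v \<Rightarrow> 'e \<Rightarrow> nat" where
  "B2_incidence x = (\<lambda>a. B2_embed (Some (tgt A a = x, src A a = x)))"

lemma sg_val_B2_incidence: "sg_val V X (B2_sg, B2_incidence x)"
  using B2_embedding(1) B2_embed_in unfolding sg_val_def B2_incidence_def by auto

text \<open>Evaluate at the two-vertex semigroupoid K2, where an edge is determined by its endpoints,
  and push forward to B2.\<close>

lemma to_free_sg_B2_incidence:
  assumes s: "(x0, y, w) \<in> E" and x: "x \<in> verts A"
  shows "to_free_sg (x0, y, w) (B2_sg, B2_incidence x) = B2_embed (Some (y = x, x0 = x))"
proof -
  define fv :: "'v \<Rightarrow> nat" where "fv = (\<lambda>v. if v = x then 1 else 0)"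
  define fe where "fe = (\<lambda>a. 2 * fv (tgt A a) + fv (src A a))"
  define he where "he = (\<lambda>e::nat. B2_embed (Some (e div 2 = 1, e mod 2 = 1)))"
  have vK: "sgd_val (gV V) A (sgd_K2, fv, fe)"
    unfolding sgd_val_def graph_hom_def using sgd_K2_in_gV by (auto simp: sgd_K2_def fv_def fe_def)
  have vB: "sgd_val (gV V) A (sg_as_sgd B2_sg, \<lambda>_. 0, B2_incidence x)"
    by (rule sgd_val_sg_as_sgd[OF sg_val_B2_incidence])
  have hom: "sgd_hom sgd_K2 (sg_as_sgd B2_sg) (\<lambda>_. 0) he"
    unfolding sgd_hom_def graph_hom_def
  proof (intro conjI ballI impI)
    fix s t assume "s \<in> edges sgd_K2" "t \<in> edges sgd_K2" "src sgd_K2 s = tgt sgd_K2 t"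
    then have "s mod 2 = t div 2" by (simp add: sgd_K2_def)
    then show "he (mul sgd_K2 s t) = mul (sg_as_sgd B2_sg) (he s) (he t)"
      by (simp add: he_def sgd_K2_def sg_as_sgd_def B2_embed_mul[symmetric] B2_mul)
  qed (auto simp: sg_as_sgd_def he_def B2_embed_in)
  have "he (w (sgd_K2, fv, fe)) = w (sg_as_sgd B2_sg, \<lambda>_. 0, B2_incidence x)"
    by (rule free_sgd_edgesD(7)[OF s vK vB hom]) (auto simp: he_def fe_def fv_def B2_incidence_def)
  moreover have "w (sgd_K2, fv, fe) \<in> edges sgd_K2"
    using free_sgd_edgesD(3)[OF s vK] sgd_gen_subset_edges[OF gV_is_sgd[OF sgd_K2_in_gV]] vK
    unfolding sgd_val_def by auto
  then have "w (sgd_K2, fv, fe) = 2 * fv y + fv x0"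
    using sgd_K2_edge free_sgd_edgesD(4,5)[OF s vK] by metis
  ultimately have "w (sg_as_sgd B2_sg, \<lambda>_. 0, B2_incidence x) = B2_embed (Some (y = x, x0 = x))"
    by (cases "y = x"; cases "x0 = x"; simp add: he_def fv_def)
  then show ?thesis using sg_val_B2_incidence by (simp add: to_free_sg_eval)
qed

lemma to_free_sg_endpoints:
  assumes s: "(x0, y, w) \<in> E" and s': "(x0', y', w') \<in> E"
    and "to_free_sg (x0', y', w') (B2_sg, B2_incidence x0) = to_free_sg (x0, y, w) (B2_sg, B2_incidence x0)"
    and "to_free_sg (x0', y', w') (B2_sg, B2_incidence y) = to_free_sg (x0, y, w) (B2_sg, B2_incidence y)"
  shows "x0' = x0 \<and> y' = y"
proof -
  have x: "x0 \<in> verts A" "y \<in> verts A" using free_sgd_edgesD(1,2)[OF s] by auto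
  have "Some (y' = x0, x0' = x0) = Some (y = x0, x0 = x0)"
    using assms(3) to_free_sg_B2_incidence[OF s x(1)] to_free_sg_B2_incidence[OF s' x(1)]
      injD[OF B2_embedding(3)] by metis
  moreover have "Some (y' = y, x0' = y) = Some (y = y, x0 = y)"
    using assms(4) to_free_sg_B2_incidence[OF s x(2)] to_free_sg_B2_incidence[OF s' x(2)]
      injD[OF B2_embedding(3)] by metis
  ultimately show ?thesis by auto
qed

subsection \<open>Divisions recover the remaining coordinates\<close>

text \<open>Each C in gV divides a member of V (chosen once and for all); a valuation of A in C is
  transported along this division to a valuation of the edges of A in that semigroup.\<close>

definition div_sg :: "(nat, nat) sgd \<Rightarrow> nat sg" where
  "div_sg C = (SOME S. S \<in> V \<and> (\<exists>f \<tau>. sgd_division C (sg_as_sgd S) f \<tau>))"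

definition div_rel :: "(nat, nat) sgd \<Rightarrow> (nat \<times> nat) set" where
  "div_rel C = (SOME \<tau>. \<exists>f. sgd_division C (sg_as_sgd (div_sg C)) f \<tau>)"

definition div_val :: "('v, 'e) sgd_val \<Rightarrow> nat sg \<times> ('e \<Rightarrow> nat)" where
  "div_val v = (div_sg (fst v), \<lambda>a. SOME t. (snd (snd v) a, t) \<in> div_rel (fst v))"

lemma div_sg_div_rel:
  assumes "C \<in> gV V"
  shows "div_sg C \<in> V" "\<exists>f. sgd_division C (sg_as_sgd (div_sg C)) f (div_rel C)"
proof -
  have "\<exists>S. S \<in> V \<and> (\<exists>f \<tau>. sgd_division C (sg_as_sgd S) f \<tau>)"
    using gV_subset_sg_divisor_closure[OF pvar] assms
    unfolding sg_divisor_closure_def sgd_divides_iff by blast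
  then have S: "div_sg C \<in> V \<and> (\<exists>f \<tau>. sgd_division C (sg_as_sgd (div_sg C)) f \<tau>)"
    unfolding div_sg_def by (rule someI_ex)
  then show "div_sg C \<in> V" by blast
  from S have "\<exists>\<tau> f. sgd_division C (sg_as_sgd (div_sg C)) f \<tau>" by blast
  then show "\<exists>f. sgd_division C (sg_as_sgd (div_sg C)) f (div_rel C)"
    unfolding div_rel_def by (rule someI_ex)
qed

lemma div_val_rel:
  assumes v: "sgd_val (gV V) A (C, fv, fe)" and a: "a \<in> X"
  shows "(fe a, snd (div_val (C, fv, fe)) a) \<in> div_rel C"
proof -
  have C: "C \<in> gV V" and g: "graph_hom A C fv fe" using v unfolding sgd_val_def by auto
  obtain f where d: "sgd_division C (sg_as_sgd (div_sg C)) f (div_rel C)" using div_sg_div_rel[OF C] by blast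
  have "fe a \<in> edges C" using g a unfolding graph_hom_def by auto
  then have "\<exists>t. (fe a, t) \<in> div_rel C" using sgd_divisionD(2)[OF d] by blast
  then have "(fe a, SOME t. (fe a, t) \<in> div_rel C) \<in> div_rel C" by (rule someI_ex)
  then show ?thesis by (simp add: div_val_def)
qed

lemma sg_val_div_val:
  assumes v: "sgd_val (gV V) A (C, fv, fe)" shows "sg_val V X (div_val (C, fv, fe))"
proof -
  have C: "C \<in> gV V" using v unfolding sgd_val_def by auto
  obtain f where d: "sgd_division C (sg_as_sgd (div_sg C)) f (div_rel C)" using div_sg_div_rel[OF C] by blast
  have "snd (div_val (C, fv, fe)) a \<in> fst (div_sg C)" if "a \<in> X" for a
    using sgd_divisionD(4)[OF d div_val_rel[OF v that]] by (simp add: sg_as_sgd_def)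
  then show ?thesis using div_sg_div_rel(1)[OF C] unfolding sg_val_def by (auto simp: div_val_def)
qed

text \<open>Evaluate at the product of C with the semigroup it divides, whose generated
  subsemigroupoid lies in the division relation.\<close>

lemma free_sgd_edge_div_rel:
  assumes s: "(x0, y, w) \<in> E" and v: "sgd_val (gV V) A (C, fv, fe)"
  shows "(w (C, fv, fe), to_free_sg (x0, y, w) (div_val (C, fv, fe))) \<in> div_rel C"
proof -
  have C: "C \<in> gV V" and g: "graph_hom A C fv fe" using v unfolding sgd_val_def by auto
  let ?S = "div_sg C" and ?\<tau> = "div_rel C" and ?\<phi> = "snd (div_val (C, fv, fe))"
  obtain f where d: "sgd_division C (sg_as_sgd ?S) f ?\<tau>" using div_sg_div_rel[OF C] by blast
  have SV: "?S \<in> V" using div_sg_div_rel[OF C] by blast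
  let ?P = "sgd_prod_nat C (sg_as_sgd ?S)"
  have P: "?P \<in> gV V"
    by (rule gV_prod_closed[OF fin_sgd_sgd_prod_nat[OF gV_fin_sgd[OF pvar C]
          fin_sgd_sg_as_sgd[OF sg_pvar_fin_sg[OF pvar SV]]] C sg_as_sgd_in_gV[OF SV] sgd_iso_sgd_prod_nat])
  define fvP where "fvP = (\<lambda>x. prod_encode (fv x, 0::nat))"
  define feP where "feP = (\<lambda>a. prod_encode (fe a, ?\<phi> a))"
  have vS: "sgd_val (gV V) A (sg_as_sgd ?S, \<lambda>_. 0, ?\<phi>)"
    using sgd_val_sg_as_sgd sg_val_div_val[OF v] by (simp add: div_val_def)
  have "?\<phi> a \<in> fst ?S" if "a \<in> X" for a
    using sgd_divisionD(4)[OF d div_val_rel[OF v that]] by (simp add: sg_as_sgd_def)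
  then have vP: "sgd_val (gV V) A (?P, fvP, feP)"
    unfolding sgd_val_def graph_hom_def using P g
    by (auto simp: graph_hom_def sgd_prod_nat_def fvP_def feP_def sg_as_sgd_def)
  have "prod_decode (w (?P, fvP, feP)) \<in> ?\<tau>"
    by (rule sgd_gen_prod_nat_in_division[OF d _ free_sgd_edgesD(3)[OF s vP]])
      (use div_val_rel[OF v] in \<open>auto simp: feP_def\<close>)
  moreover have "fst (prod_decode (w (?P, fvP, feP))) = w (C, fv, fe)"
    by (rule free_sgd_edgesD(7)[OF s vP v sgd_hom_prod_nat_fst]) (auto simp: fvP_def feP_def)
  moreover have "snd (prod_decode (w (?P, fvP, feP))) = w (sg_as_sgd ?S, \<lambda>_. 0, ?\<phi>)"
    by (rule free_sgd_edgesD(7)[OF s vP vS sgd_hom_prod_nat_snd]) (auto simp: fvP_def feP_def)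
  moreover have "to_free_sg (x0, y, w) (div_val (C, fv, fe)) = w (sg_as_sgd ?S, \<lambda>_. 0, ?\<phi>)"
    using sg_val_div_val[OF v] by (simp add: to_free_sg_def one_vertex_val_def div_val_def)
  ultimately show ?thesis by (metis prod.collapse)
qed

lemma free_sgd_edge_determined:
  assumes s: "(x0, y, w) \<in> E" and s': "(x0, y, w') \<in> E" and v: "sgd_val (gV V) A (C, fv, fe)"
    and eq: "to_free_sg (x0, y, w) (div_val (C, fv, fe)) = to_free_sg (x0, y, w') (div_val (C, fv, fe))"
  shows "w (C, fv, fe) = w' (C, fv, fe)"
proof -
  have C: "C \<in> gV V" using v unfolding sgd_val_def by auto
  obtain f where d: "sgd_division C (sg_as_sgd (div_sg C)) f (div_rel C)" using div_sg_div_rel[OF C] by blast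
  show ?thesis
    using sgd_divisionD(8)[OF d free_sgd_edge_div_rel[OF s v] free_sgd_edge_div_rel[OF s' v]] eq
      free_sgd_edgesD(4,5)[OF s v] free_sgd_edgesD(4,5)[OF s' v] by simp
qed

lemma to_free_sg_determines_nhd:
  assumes s: "s \<in> E" and F: "finite F"
  shows "\<exists>Gs. finite Gs \<and> (\<forall>s'\<in>E. (\<forall>g\<in>Gs. to_free_sg s' g = to_free_sg s g) \<longrightarrow> s' \<in> sgd_nhd (gV V) A s F)"
proof -
  obtain x0 y w where s_eq: "s = (x0, y, w)" by (cases s)
  let ?Gs = "{(B2_sg, B2_incidence x0), (B2_sg, B2_incidence y)} \<union> div_val ` F"
  have nhd: "(x0', y', w') \<in> sgd_nhd (gV V) A s F"
    if s': "(x0', y', w') \<in> E" and eq: "\<forall>g\<in>?Gs. to_free_sg (x0', y', w') g = to_free_sg s g" for x0' y' w'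
  proof -
    have ends: "x0' = x0" "y' = y" using to_free_sg_endpoints[OF s[unfolded s_eq] s'] eq s_eq by auto
    have "w' v = w v" if "v \<in> F" for v
    proof (cases "sgd_val (gV V) A v")
      case True
      obtain C fv fe where v: "v = (C, fv, fe)" by (cases v)
      show ?thesis
        using free_sgd_edge_determined[OF s'[unfolded ends] s[unfolded s_eq]] True v eq s_eq ends
          \<open>v \<in> F\<close> by simp
    next
      case False
      then show ?thesis using free_sgd_edgesD(6)[OF s[unfolded s_eq]] free_sgd_edgesD(6)[OF s'] by simp
    qed
    then show ?thesis using s' ends s_eq unfolding sgd_nhd_def by simp
  qed
  show ?thesis
  proof (intro exI[of _ ?Gs] conjI ballI impI)
    show "finite ?Gs" using F by simp
    fix s' assume "s' \<in> E" "\<forall>g\<in>?Gs. to_free_sg s' g = to_free_sg s g"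
    then show "s' \<in> sgd_nhd (gV V) A s F" using nhd by (cases s') blast
  qed
qed

lemma to_free_sg_inj:
  assumes "s \<in> E" "s' \<in> E" "to_free_sg s' = to_free_sg s"
  shows "s' = s"
proof -
  have "s' \<in> sgd_nhd (gV V) A s {v}" for v
    using to_free_sg_determines_nhd[OF assms(1), of "{v}"] assms(2,3) by auto
  then have "fst s' = fst s" "fst (snd s') = fst (snd s)" "snd (snd s') = snd (snd s)"
    unfolding sgd_nhd_def by auto
  then show ?thesis by (simp add: prod_eq_iff)
qed

subsection \<open>Lifting from the free pro-V semigroup\<close>

text \<open>A single word gives the values of u at the given valuations and at the B2 incidences of all
  vertices; the latter force it to be a path from x0 to y.\<close>

lemma free_sg_path_word:
  assumes s: "(x0, y, w) \<in> E" and u: "u \<in> free_sg V X"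
    and ub: "\<forall>x\<in>verts A. u (B2_sg, B2_incidence x) = to_free_sg (x0, y, w) (B2_sg, B2_incidence x)"
    and vs: "\<forall>v\<in>set vs. sg_val V X v"
  shows "\<exists>a l. a \<in> X \<and> set l \<subseteq> X \<and> graph_path A a l \<and> tgt A a = y \<and> src A (last (a # l)) = x0 \<and>
     (\<forall>v\<in>set vs. u v = word_eval (snd (fst v)) (snd v) a l)"
proof -
  obtain xs where xs: "set xs = verts A" using finite_list[OF finite_verts] by blast
  let ?vs = "vs @ map (\<lambda>x. (B2_sg, B2_incidence x)) xs"
  have "\<forall>v\<in>set ?vs. sg_val V X v" using vs sg_val_B2_incidence by auto
  then obtain a l where al: "a \<in> X" "set l \<subseteq> X" "\<forall>v\<in>set ?vs. u v = word_eval (snd (fst v)) (snd v) a l"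
    using free_sg_word_eval[OF pvar u] by blast
  have x0y: "x0 \<in> verts A" "y \<in> verts A" using free_sgd_edgesD(1,2)[OF s] by auto
  have chain: "matching_chain (\<lambda>e. tgt A e = x) (\<lambda>e. src A e = x) a l \<and> (tgt A a = x) = (y = x) \<and>
      (src A (last (a # l)) = x) = (x0 = x)" if x: "x \<in> verts A" for x
  proof -
    let ?\<beta> = "\<lambda>e. Some (tgt A e = x, src A e = x)"
    have "u (B2_sg, B2_incidence x) = word_eval (snd B2_sg) (B2_incidence x) a l"
      using al(3) x xs by auto
    also have "\<dots> = B2_embed (word_eval (snd B2) ?\<beta> a l)"
      by (rule sg_hom_word_eval[OF fin_sg_B2 B2_embedding(2), symmetric])
        (use al(1,2) in \<open>auto simp: B2_incidence_def fst_B2\<close>)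
    finally have "B2_embed (word_eval (snd B2) ?\<beta> a l) = B2_embed (Some (y = x, x0 = x))"
      using ub x to_free_sg_B2_incidence[OF s x] by simp
    then have "word_eval (snd B2) ?\<beta> a l = Some (y = x, x0 = x)"
      using injD[OF B2_embedding(3)] by blast
    then show ?thesis unfolding word_eval_B2 by (auto split: if_splits)
  qed
  have "graph_path A a l" by (rule graph_path_if_matching_chains[OF graph al(1,2)]) (use chain in blast)
  moreover have "tgt A a = y" "src A (last (a # l)) = x0" using chain[OF x0y(2)] chain[OF x0y(1)] by simp_all
  moreover have "\<forall>v\<in>set vs. u v = word_eval (snd (fst v)) (snd v) a l" using al(3) by simp
  ultimately show ?thesis using al(1,2) by blast
qed

text \<open>At a valuation in C, the edge of C from x0 to y that the chosen division relates to the
  corresponding value of u. It is unique since divisions are injective on coterminal edges; THE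
  is a junk value when no such edge exists, which the lemmas below rule out.\<close>

definition lift_val :: "'v \<Rightarrow> 'v \<Rightarrow> (nat sg \<times> ('e \<Rightarrow> nat) \<Rightarrow> nat) \<Rightarrow> ('v, 'e) sgd_val \<Rightarrow> nat" where
  "lift_val x0 y u v = (if sgd_val (gV V) A v then (THE c. c \<in> edges (fst v) \<and> src (fst v) c = fst (snd v) x0 \<and>
      tgt (fst v) c = fst (snd v) y \<and> (c, u (div_val v)) \<in> div_rel (fst v)) else 0)"

lemma lift_val_word_eval:
  assumes v: "sgd_val (gV V) A (C, fv, fe)" and al: "a \<in> X" "set l \<subseteq> X" "graph_path A a l"
    "tgt A a = y" "src A (last (a # l)) = x0"
    and u: "u (div_val (C, fv, fe)) = word_eval (snd (div_sg C)) (snd (div_val (C, fv, fe))) a l"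
  shows "lift_val x0 y u (C, fv, fe) = word_eval (mul C) fe a l"
proof -
  have C: "C \<in> gV V" and g: "graph_hom A C fv fe" using v unfolding sgd_val_def by auto
  obtain f where d: "sgd_division C (sg_as_sgd (div_sg C)) f (div_rel C)" using div_sg_div_rel[OF C] by blast
  let ?c = "word_eval (mul C) fe a l"
  have c: "?c \<in> edges C" "src C ?c = fv x0" "tgt C ?c = fv y"
    using word_eval_sgd[OF gV_is_sgd[OF C] g al(1-3)] al(4,5) by auto
  have c\<tau>: "(?c, u (div_val (C, fv, fe))) \<in> div_rel C"
    using sgd_division_word_eval[OF gV_is_sgd[OF C] g d div_val_rel[OF v] al(1-3)] u by simp
  have "(THE c. c \<in> edges C \<and> src C c = fv x0 \<and> tgt C c = fv y \<and> (c, u (div_val (C, fv, fe))) \<in> div_rel C) = ?c"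
  proof (rule the_equality)
    show "?c \<in> edges C \<and> src C ?c = fv x0 \<and> tgt C ?c = fv y \<and> (?c, u (div_val (C, fv, fe))) \<in> div_rel C"
      using c c\<tau> by blast
    fix c' assume "c' \<in> edges C \<and> src C c' = fv x0 \<and> tgt C c' = fv y \<and> (c', u (div_val (C, fv, fe))) \<in> div_rel C"
    then show "c' = ?c" using sgd_divisionD(8)[OF d _ c\<tau>] c by auto
  qed
  then show ?thesis using v by (simp add: lift_val_def)
qed

context
  fixes x0 y w u
  assumes s: "(x0, y, w) \<in> E" and u: "u \<in> free_sg V X"
    and ub: "\<forall>x\<in>verts A. u (B2_sg, B2_incidence x) = to_free_sg (x0, y, w) (B2_sg, B2_incidence x)"
begin

lemma lift_val_path_word:
  assumes v: "sgd_val (gV V) A (C, fv, fe)" and vs: "\<forall>v\<in>set vs. sg_val V X v"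
  shows "\<exists>a l. a \<in> X \<and> set l \<subseteq> X \<and> graph_path A a l \<and> tgt A a = y \<and> src A (last (a # l)) = x0 \<and>
     lift_val x0 y u (C, fv, fe) = word_eval (mul C) fe a l \<and> (\<forall>v\<in>set vs. u v = word_eval (snd (fst v)) (snd v) a l)"
proof -
  obtain a l where al: "a \<in> X" "set l \<subseteq> X" "graph_path A a l" "tgt A a = y" "src A (last (a # l)) = x0"
    "\<forall>v\<in>set (div_val (C, fv, fe) # vs). u v = word_eval (snd (fst v)) (snd v) a l"
    using free_sg_path_word[OF s u ub, of "div_val (C, fv, fe) # vs"] sg_val_div_val[OF v] vs by auto
  have "lift_val x0 y u (C, fv, fe) = word_eval (mul C) fe a l"
    by (rule lift_val_word_eval[OF v al(1-5)]) (use al(6) in \<open>simp add: div_val_def\<close>)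
  moreover have "\<forall>v\<in>set vs. u v = word_eval (snd (fst v)) (snd v) a l" using al(6) by simp
  ultimately show ?thesis using al(1-5) by blast
qed

lemma lift_in_edges: "(x0, y, lift_val x0 y u) \<in> E"
proof (rule free_sgd_edgesI)
  show "x0 \<in> verts A" "y \<in> verts A" using free_sgd_edgesD(1,2)[OF s] by auto
next
  fix C fv fe assume v: "sgd_val (gV V) A (C, fv, fe)"
  have C: "C \<in> gV V" and g: "graph_hom A C fv fe" using v unfolding sgd_val_def by auto
  obtain a l where al: "a \<in> X" "set l \<subseteq> X" "graph_path A a l" "tgt A a = y" "src A (last (a # l)) = x0"
    "lift_val x0 y u (C, fv, fe) = word_eval (mul C) fe a l" using lift_val_path_word[OF v, of "[]"] by auto
  note word = word_eval_sgd[OF gV_is_sgd[OF C] g al(1-3)]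
  show "lift_val x0 y u (C, fv, fe) \<in> sgd_gen C (fe ` X)" using word al(6) by simp
  show "src C (lift_val x0 y u (C, fv, fe)) = fv x0" using word al(5,6) by simp
  show "tgt C (lift_val x0 y u (C, fv, fe)) = fv y" using word al(4,6) by simp
next
  fix v assume "\<not> sgd_val (gV V) A v" then show "lift_val x0 y u v = 0" by (simp add: lift_val_def)
next
  fix S fv fe T gv ge hv he
  assume v: "sgd_val (gV V) A (S, fv, fe)" and v': "sgd_val (gV V) A (T, gv, ge)"
    and h: "sgd_hom S T hv he" and he: "\<forall>e\<in>edges A. he (fe e) = ge e"
  have S: "S \<in> gV V" and g: "graph_hom A S fv fe" using v unfolding sgd_val_def by auto
  obtain a l where al: "a \<in> X" "set l \<subseteq> X" "graph_path A a l" "tgt A a = y" "src A (last (a # l)) = x0"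
    "lift_val x0 y u (S, fv, fe) = word_eval (mul S) fe a l"
    "u (div_val (T, gv, ge)) = word_eval (snd (div_sg T)) (snd (div_val (T, gv, ge))) a l"
    using lift_val_path_word[OF v, of "[div_val (T, gv, ge)]"] sg_val_div_val[OF v'] by (auto simp: div_val_def)
  have "lift_val x0 y u (T, gv, ge) = word_eval (mul T) ge a l"
    by (rule lift_val_word_eval[where u = u, OF v' al(1-5,7)])
  moreover have "he (word_eval (mul S) fe a l) = word_eval (mul T) ge a l"
    by (rule sgd_hom_word_eval[OF gV_is_sgd[OF S] g h _ al(1-3)]) (use he in blast)
  ultimately show "he (lift_val x0 y u (S, fv, fe)) = lift_val x0 y u (T, gv, ge)" using al(6) by simp
qed

lemma to_free_sg_lift: "to_free_sg (x0, y, lift_val x0 y u) = u"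
proof
  fix g show "to_free_sg (x0, y, lift_val x0 y u) g = u g"
  proof (cases "sg_val V X g")
    case True
    obtain S \<phi> where g: "g = (S, \<phi>)" by (cases g)
    have v: "sgd_val (gV V) A (sg_as_sgd S, \<lambda>_. 0, \<phi>)" using sgd_val_sg_as_sgd True g by blast
    obtain a l where "lift_val x0 y u (sg_as_sgd S, \<lambda>_. 0, \<phi>) = word_eval (mul (sg_as_sgd S)) \<phi> a l"
      "u (S, \<phi>) = word_eval (snd S) \<phi> a l"
      using lift_val_path_word[OF v, of "[(S, \<phi>)]"] True g by auto
    then show ?thesis using True g by (simp add: to_free_sg_eval sg_as_sgd_def)
  next
    case False
    then show ?thesis using free_sgD(2)[OF u] by (simp add: to_free_sg_def)
  qed
qed

end

lemma lift_in_nhd: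
  assumes s: "(x0, y, w) \<in> E" and F: "finite F"
  shows "\<exists>Gs. finite Gs \<and> (\<forall>u\<in>free_sg V X. (\<forall>g\<in>Gs. u g = to_free_sg (x0, y, w) g) \<longrightarrow>
      (x0, y, lift_val x0 y u) \<in> sgd_nhd (gV V) A (x0, y, w) F \<and> to_free_sg (x0, y, lift_val x0 y u) = u)"
proof -
  obtain Gs where Gs: "finite Gs"
    "\<forall>s'\<in>E. (\<forall>g\<in>Gs. to_free_sg s' g = to_free_sg (x0, y, w) g) \<longrightarrow> s' \<in> sgd_nhd (gV V) A (x0, y, w) F"
    using to_free_sg_determines_nhd[OF s F] by blast
  let ?Gs = "Gs \<union> (\<lambda>x. (B2_sg, B2_incidence x)) ` verts A"
  show ?thesis
  proof (intro exI[of _ ?Gs] conjI ballI impI)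
    show "finite ?Gs" using Gs(1) finite_verts by blast
    fix u assume u: "u \<in> free_sg V X" and eq: "\<forall>g\<in>?Gs. u g = to_free_sg (x0, y, w) g"
    then have ub: "\<forall>x\<in>verts A. u (B2_sg, B2_incidence x) = to_free_sg (x0, y, w) (B2_sg, B2_incidence x)"
      by blast
    show lift: "to_free_sg (x0, y, lift_val x0 y u) = u" by (rule to_free_sg_lift[OF s u ub])
    show "(x0, y, lift_val x0 y u) \<in> sgd_nhd (gV V) A (x0, y, w) F"
      using Gs(2) lift_in_edges[OF s u ub] eq lift by simp
  qed
qed

lemma to_free_sg_eq_on_nhd:
  assumes "z \<in> sgd_nhd (gV V) A q (one_vertex_val ` H)" "h \<in> H"
  shows "to_free_sg z h = to_free_sg q h"
  using assms unfolding sgd_nhd_def to_free_sg_def by auto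

lemma free_sgd_mul_image_nhds:
  assumes z: "z \<in> E" and s': "s' \<in> sgd_nhd (gV V) A s F1" and t': "t' \<in> sgd_nhd (gV V) A t F2"
    and comp: "fst s = fst (snd t)"
    and eq: "to_free_sg z = free_sg_mul V X (to_free_sg s') (to_free_sg t')"
  shows "z \<in> (\<lambda>(s, t). free_sgd_mul (gV V) A s t) `
    (free_sgd_D (gV V) A \<inter> sgd_nhd (gV V) A s F1 \<times> sgd_nhd (gV V) A t F2)"
proof -
  obtain x0 y0 w0 x1 y1 w1 where st': "s' = (x0, y0, w0)" "t' = (x1, y1, w1)" by (cases s', cases t')
  have E': "s' \<in> E" "t' \<in> E" and "x0 = y1"
    using s' t' comp st' unfolding sgd_nhd_def by auto
  then have D: "(s', t') \<in> free_sgd_D (gV V) A" using st' unfolding free_sgd_D_def by simp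
  have "to_free_sg (free_sgd_mul (gV V) A s' t') = to_free_sg z"
    using to_free_sg_mul eq st' by simp
  then have "z = free_sgd_mul (gV V) A s' t'"
    using to_free_sg_inj[OF z free_sgd_mul_in_edges[OF E'[unfolded st'] \<open>x0 = y1\<close>]] st' by simp
  then show ?thesis using D s' t' by (intro image_eqI[of _ _ "(s', t')"]) simp_all
qed

lemma free_sgd_mul_nhd:
  assumes H: "free_sg_mult_open V X"
    and s: "(x0, y0, w0) \<in> E" and t: "(x1, y1, w1) \<in> E" and comp: "x0 = y1"
    and F1: "finite F1" and F2: "finite F2"
  shows "\<exists>F. finite F \<and> sgd_nhd (gV V) A (free_sgd_mul (gV V) A (x0, y0, w0) (x1, y1, w1)) F \<subseteq>
    (\<lambda>(s, t). free_sgd_mul (gV V) A s t) `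
      (free_sgd_D (gV V) A \<inter> sgd_nhd (gV V) A (x0, y0, w0) F1 \<times> sgd_nhd (gV V) A (x1, y1, w1) F2)"
proof -
  let ?q = "free_sgd_mul (gV V) A (x0, y0, w0) (x1, y1, w1)"
  let ?m = "\<lambda>(u, w). free_sg_mul V X u w"
  obtain Gs1 where Gs1: "finite Gs1" "\<forall>u\<in>free_sg V X. (\<forall>g\<in>Gs1. u g = to_free_sg (x0, y0, w0) g) \<longrightarrow>
      (x0, y0, lift_val x0 y0 u) \<in> sgd_nhd (gV V) A (x0, y0, w0) F1 \<and> to_free_sg (x0, y0, lift_val x0 y0 u) = u"
    using lift_in_nhd[OF s F1] by blast
  obtain Gs2 where Gs2: "finite Gs2" "\<forall>u\<in>free_sg V X. (\<forall>g\<in>Gs2. u g = to_free_sg (x1, y1, w1) g) \<longrightarrow>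
      (x1, y1, lift_val x1 y1 u) \<in> sgd_nhd (gV V) A (x1, y1, w1) F2 \<and> to_free_sg (x1, y1, lift_val x1 y1 u) = u"
    using lift_in_nhd[OF t F2] by blast
  let ?O1 = "{u \<in> free_sg V X. \<forall>g\<in>Gs1. u g = to_free_sg (x0, y0, w0) g}"
  let ?O2 = "{u \<in> free_sg V X. \<forall>g\<in>Gs2. u g = to_free_sg (x1, y1, w1) g}"
  have "openin (prod_topology (free_sg_top V X) (free_sg_top V X)) (?O1 \<times> ?O2)"
    using free_sg_nhd_open[OF Gs1(1)] free_sg_nhd_open[OF Gs2(1)] by (simp add: openin_prod_Times_iff)
  moreover have "\<forall>U. openin (prod_topology (free_sg_top V X) (free_sg_top V X)) U \<longrightarrow>
      openin (free_sg_top V X) (?m ` U)"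
    using H unfolding free_sg_mult_open_def open_map_def .
  ultimately have "openin (free_sg_top V X) (?m ` (?O1 \<times> ?O2))" by blast
  moreover have "to_free_sg ?q \<in> ?m ` (?O1 \<times> ?O2)"
  proof (rule image_eqI)
    show "to_free_sg ?q = ?m (to_free_sg (x0, y0, w0), to_free_sg (x1, y1, w1))"
      using to_free_sg_mul by simp
    show "(to_free_sg (x0, y0, w0), to_free_sg (x1, y1, w1)) \<in> ?O1 \<times> ?O2"
      using to_free_sg_in_free_sg[OF s] to_free_sg_in_free_sg[OF t] by simp
  qed
  ultimately obtain H' where H': "finite H'"
    "{u \<in> free_sg V X. \<forall>h\<in>H'. u h = to_free_sg ?q h} \<subseteq> ?m ` (?O1 \<times> ?O2)"
    by (rule free_sg_nhd_subsetE)
  have "sgd_nhd (gV V) A ?q (one_vertex_val ` H') \<subseteq> (\<lambda>(s, t). free_sgd_mul (gV V) A s t) `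
      (free_sgd_D (gV V) A \<inter> sgd_nhd (gV V) A (x0, y0, w0) F1 \<times> sgd_nhd (gV V) A (x1, y1, w1) F2)"
  proof
    fix z assume z: "z \<in> sgd_nhd (gV V) A ?q (one_vertex_val ` H')"
    then have zE: "z \<in> E" unfolding sgd_nhd_def by blast
    then obtain xz yz wz where z_eq: "z = (xz, yz, wz)" by (cases z)
    have "to_free_sg z \<in> ?m ` (?O1 \<times> ?O2)"
      using H'(2) to_free_sg_in_free_sg[OF zE[unfolded z_eq]] to_free_sg_eq_on_nhd[OF z] z_eq by blast
    then obtain u w where uw: "u \<in> ?O1" "w \<in> ?O2" "to_free_sg z = free_sg_mul V X u w" by auto
    have s': "(x0, y0, lift_val x0 y0 u) \<in> sgd_nhd (gV V) A (x0, y0, w0) F1"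
      "to_free_sg (x0, y0, lift_val x0 y0 u) = u" using Gs1(2) uw(1) by auto
    have t': "(x1, y1, lift_val x1 y1 w) \<in> sgd_nhd (gV V) A (x1, y1, w1) F2"
      "to_free_sg (x1, y1, lift_val x1 y1 w) = w" using Gs2(2) uw(2) by auto
    show "z \<in> (\<lambda>(s, t). free_sgd_mul (gV V) A s t) `
      (free_sgd_D (gV V) A \<inter> sgd_nhd (gV V) A (x0, y0, w0) F1 \<times> sgd_nhd (gV V) A (x1, y1, w1) F2)"
      by (rule free_sgd_mul_image_nhds[OF zE s'(1) t'(1)]) (use comp uw(3) s'(2) t'(2) in simp_all)
  qed
  then show ?thesis by (intro exI[of _ "one_vertex_val ` H'"] conjI finite_imageI H'(1))
qed

theorem free_sgd_mult_open_if_free_sg_mult_open: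
  assumes H: "free_sg_mult_open V X" shows "free_sgd_mult_open (gV V) A"
  unfolding free_sgd_mult_open_def open_map_def
proof (intro allI impI)
  let ?T = "free_sgd_top (gV V) A" and ?D = "free_sgd_D (gV V) A"
  let ?f = "\<lambda>(s, t). free_sgd_mul (gV V) A s t"
  fix U assume "openin (subtopology (prod_topology ?T ?T) ?D) U"
  then obtain W where W: "openin (prod_topology ?T ?T) W" "U = W \<inter> ?D" by (auto simp: openin_subtopology)
  show "openin ?T (?f ` U)"
  proof (subst openin_subopen, intro ballI)
    fix q assume "q \<in> ?f ` U"
    then obtain x0 y0 w0 x1 y1 w1 where st: "((x0, y0, w0), (x1, y1, w1)) \<in> W" "((x0, y0, w0), (x1, y1, w1)) \<in> ?D"
      and q: "q = free_sgd_mul (gV V) A (x0, y0, w0) (x1, y1, w1)" using W(2) by auto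
    then have s: "(x0, y0, w0) \<in> E" and t: "(x1, y1, w1) \<in> E" and comp: "x0 = y1"
      unfolding free_sgd_D_def by auto
    from W(1) have "\<forall>a b. (a, b) \<in> W \<longrightarrow> (\<exists>N1 N2. openin ?T N1 \<and> openin ?T N2 \<and> a \<in> N1 \<and> b \<in> N2 \<and> N1 \<times> N2 \<subseteq> W)"
      by (simp only: openin_prod_topology_alt)
    then obtain N1 N2 where N: "openin ?T N1" "openin ?T N2" "(x0, y0, w0) \<in> N1" "(x1, y1, w1) \<in> N2" "N1 \<times> N2 \<subseteq> W"
      using st(1) by (elim allE impE exE conjE) blast+
    obtain F1 where F1: "finite F1" "sgd_nhd (gV V) A (x0, y0, w0) F1 \<subseteq> N1"
      using N(1,3) by (rule sgd_nhd_subsetE)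
    obtain F2 where F2: "finite F2" "sgd_nhd (gV V) A (x1, y1, w1) F2 \<subseteq> N2"
      using N(2,4) by (rule sgd_nhd_subsetE)
    obtain F where F: "finite F" and nhd: "sgd_nhd (gV V) A q F \<subseteq>
      ?f ` (?D \<inter> sgd_nhd (gV V) A (x0, y0, w0) F1 \<times> sgd_nhd (gV V) A (x1, y1, w1) F2)"
      using free_sgd_mul_nhd[OF H s t comp F1(1) F2(1), folded q] by (elim exE conjE) blast
    have "openin ?T (sgd_nhd (gV V) A q F)" using F by (rule sgd_nhd_open)
    moreover have "q \<in> sgd_nhd (gV V) A q F"
      using free_sgd_mul_in_edges[OF s t comp] q unfolding sgd_nhd_def by simp
    moreover have "?D \<inter> sgd_nhd (gV V) A (x0, y0, w0) F1 \<times> sgd_nhd (gV V) A (x1, y1, w1) F2 \<subseteq> U"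
      using F1(2) F2(2) N(5) W(2) by blast
    then have "sgd_nhd (gV V) A q F \<subseteq> ?f ` U" using nhd by (meson image_mono order_trans)
    ultimately show "\<exists>T. openin ?T T \<and> q \<in> T \<and> T \<subseteq> ?f ` U" by blast
  qed
qed

end

theorem mainTheorem5:
  fixes A :: "('v, 'e) sgraph" and V :: "nat sg set"
  assumes "is_graph A" and "finite (verts A)"
    and "sg_pvar V" and "contains_B2 V"
    and "free_sg_mult_open V (edges A)"
  shows "free_sgd_mult_open (gV V) A"
proof -
  interpret gV_B2 A V using assms(1-4) by unfold_locales
  show ?thesis using free_sgd_mult_open_if_free_sg_mult_open assms(5) .
qed

end
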